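(* Let $K$ be a number field, let $H_1,\dots,H_4\subset\mathbb{P}^3_K$ be planes over $K$ in general position, and suppose $p$ is the $K$-rational point $H_i\cap H_j\cap H_k$ for some distinct $i,j,k\in\{1,2,3,4\}$. Let $L_1,\dots,L_r$ be lines over $K$ all passing through $p$, and let $D=H_1\cup H_2\cup H_3\cup H_4\cup L_1\cup\dots\cup L_r$. Then the integral points on $\mathbb{P}^3_K\setminus D$ are potentially dense. *)

theory Defs
  imports Complex_Main "HOL-Computational_Algebra.Polynomial"
begin

definition subfield_C :: "complex set \<Rightarrow> bool" where
  "subfield_C K \<longleftrightarrow> 0 \<in> K \<and> 1 \<in> K \<and>
     (\<forall>x\<in>K. \<forall>y\<in>K. x + y \<in> K \<and> x - y \<in> K \<and> x * y \<in> K) \<and>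
     (\<forall>x\<in>K. x \<noteq> 0 \<longrightarrow> inverse x \<in> K)"

definition number_field :: "complex set \<Rightarrow> bool" where
  "number_field K \<longleftrightarrow> subfield_C K \<and>
     (\<exists>B. finite B \<and> B \<subseteq> K \<and>
        (\<forall>x\<in>K. \<exists>c. (\<forall>b\<in>B. c b \<in> \<rat>) \<and> x = (\<Sum>b\<in>B. c b * b)))"

text \<open>The ring of S-integers O_{L,S}, where S consists of the archimedean places
and the places above the primes dividing N.  Every finite set of places is contained
in such an S, so quantifying over N is the same as quantifying over S.\<close>

definition S_integers :: "complex set \<Rightarrow> nat \<Rightarrow> complex set" where
  "S_integers L N = {x \<in> L. \<exists>k::nat. algebraic_int (of_nat N ^ k * x)}"

definition S_unit :: "complex set \<Rightarrow> nat \<Rightarrow> complex \<Rightarrow> bool" where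
  "S_unit L N x \<longleftrightarrow> x \<in> S_integers L N \<and> x \<noteq> 0 \<and> inverse x \<in> S_integers L N"

definition lin :: "(nat \<Rightarrow> complex) \<Rightarrow> (nat \<Rightarrow> complex) \<Rightarrow> complex" where
  "lin h x = (\<Sum>j<4. h j * x j)"

definition coeffs_in :: "complex set \<Rightarrow> (nat \<Rightarrow> complex) \<Rightarrow> bool" where
  "coeffs_in K h \<longleftrightarrow> (\<forall>j<4. h j \<in> K)"

definition general_position4 :: "(nat \<Rightarrow> nat \<Rightarrow> complex) \<Rightarrow> bool" where
  "general_position4 h \<longleftrightarrow>
     (\<forall>c. (\<forall>j<4. (\<Sum>i<4. c i * h i j) = 0) \<longrightarrow> (\<forall>i<4. c i = 0))"

definition lin_indep2 :: "(nat \<Rightarrow> complex) \<Rightarrow> (nat \<Rightarrow> complex) \<Rightarrow> bool" where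
  "lin_indep2 u v \<longleftrightarrow> (\<forall>a b. (\<forall>j<4. a * u j + b * v j = 0) \<longrightarrow> a = 0 \<and> b = 0)"

text \<open>(D,S)-integral points of P^3 \ D, where D = H_1 \<union> .. \<union> H_4 \<union> L_1 \<union> .. \<union> L_r,
H_i = {h i = 0}, L_l = {g1 l = 0, g2 l = 0}, with respect to the model over O_{L,S}
given by these equations.  A point is represented by a coordinate vector x over
O_{L,S} that is unimodular (its coordinates generate the unit ideal); it is integral
iff its reduction modulo every prime of O_{L,S} avoids D, i.e. each h i (x) is an
S-unit and, for each line, g1 l (x), g2 l (x) generate the unit ideal.\<close>

definition integral_point ::
  "complex set \<Rightarrow> nat \<Rightarrow> (nat \<Rightarrow> nat \<Rightarrow> complex) \<Rightarrow> nat \<Rightarrow>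
   (nat \<Rightarrow> nat \<Rightarrow> complex) \<Rightarrow> (nat \<Rightarrow> nat \<Rightarrow> complex) \<Rightarrow> (nat \<Rightarrow> complex) \<Rightarrow> bool" where
  "integral_point L N h r g1 g2 x \<longleftrightarrow>
     (\<forall>j<4. x j \<in> S_integers L N) \<and>
     (\<exists>a. (\<forall>j<4. a j \<in> S_integers L N) \<and> (\<Sum>j<4. a j * x j) = 1) \<and>
     (\<forall>i<4. S_unit L N (lin (h i) x)) \<and>
     (\<forall>l<r. \<exists>a\<in>S_integers L N. \<exists>b\<in>S_integers L N.
         a * lin (g1 l) x + b * lin (g2 l) x = 1)"

definition monomials :: "nat \<Rightarrow> (nat \<Rightarrow> nat) set" where
  "monomials d = {\<alpha>. (\<forall>j\<ge>4. \<alpha> j = 0) \<and> (\<Sum>j<4. \<alpha> j) = d}"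

definition hpoly_eval :: "nat \<Rightarrow> ((nat \<Rightarrow> nat) \<Rightarrow> complex) \<Rightarrow> (nat \<Rightarrow> complex) \<Rightarrow> complex" where
  "hpoly_eval d c x = (\<Sum>\<alpha>\<in>monomials d. c \<alpha> * (\<Prod>j<4. x j ^ \<alpha> j))"

definition zariski_dense_P3 :: "(nat \<Rightarrow> complex) set \<Rightarrow> bool" where
  "zariski_dense_P3 A \<longleftrightarrow>
     (\<forall>d c. (\<forall>x\<in>A. hpoly_eval d c x = 0) \<longrightarrow> (\<forall>\<alpha>\<in>monomials d. c \<alpha> = 0))"

text \<open>Potential density: after a finite extension L of K and enlarging S (all
coefficients of the model becoming S-integral), the integral points are Zariski dense.\<close>

definition potentially_dense ::
  "complex set \<Rightarrow> (nat \<Rightarrow> nat \<Rightarrow> complex) \<Rightarrow> nat \<Rightarrow>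
   (nat \<Rightarrow> nat \<Rightarrow> complex) \<Rightarrow> (nat \<Rightarrow> nat \<Rightarrow> complex) \<Rightarrow> bool" where
  "potentially_dense K h r g1 g2 \<longleftrightarrow>
     (\<exists>L N. number_field L \<and> K \<subseteq> L \<and> N \<ge> 1 \<and>
        (\<forall>i<4. coeffs_in (S_integers L N) (h i)) \<and>
        (\<forall>l<r. coeffs_in (S_integers L N) (g1 l) \<and> coeffs_in (S_integers L N) (g2 l)) \<and>
        zariski_dense_P3 {x. integral_point L N h r g1 g2 x})"

end

theory Submission
  imports Defs "Jordan_Normal_Form.Char_Poly"
begin

text \<open>In the coordinates \<open>y = (h\<^sub>0(x), \<dots>, h\<^sub>3(x))\<close> the point \<open>p\<close> is a coordinate point, say of \<open>y\<^sub>n\<^sub>0\<close>,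
  so every line through \<open>p\<close> is cut out by two forms in the remaining coordinates \<open>y\<^sub>i, y\<^sub>j, y\<^sub>k\<close>.
  Take \<open>y\<^sub>i = 1\<close> and \<open>y\<^sub>j, y\<^sub>k, y\<^sub>n\<^sub>0\<close> powers of \<open>2\<close>: once \<open>2\<close> is an S-unit, these points avoid the
  planes modulo every prime.  For a line, eliminating between its two forms leaves a linear
  expression in \<open>u = y\<^sub>j\<close> or \<open>v = y\<^sub>k\<close>; choosing \<open>v = v\<^sub>0 2\<^bsup>e t\<^esup>\<close> with \<open>2\<^sup>e \<equiv> 1\<close> modulo the
  relevant factor depending on \<open>u\<close> turns it into a fixed nonzero constant, which becomes an
  S-unit after enlarging \<open>S\<close>.  The admissible \<open>(u, v, w)\<close> form a grid (infinitely many \<open>w\<close> and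
  \<open>u\<close>, and for each \<open>u\<close> infinitely many \<open>v\<close>), on which no nonzero form can vanish.\<close>

section \<open>Algebraic integers\<close>

interpretation int_module: Modules.module "\<lambda>(k::int) (x::'a::comm_ring_1). of_int k * x"
  by unfold_locales (simp_all add: algebra_simps)

lemma int_span_mult_closed:
  fixes a :: "'a::comm_ring_1"
  assumes "x \<in> int_module.span S" and "\<And>s. s \<in> S \<Longrightarrow> a * s \<in> int_module.span T"
  shows "a * x \<in> int_module.span T"
  using assms(1)
proof (induction rule: int_module.span_induct_alt)
  case base
  show ?case by (simp add: int_module.span_zero)
next
  case (step c s y)
  have "a * (of_int c * s + y) = of_int c * (a * s) + a * y" by (simp add: algebra_simps)
  then show ?case using step assms(2) by (simp add: int_module.span_add int_module.span_scale)
qed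

text \<open>The standard module criterion: \<open>a\<close> is an eigenvalue of the integer matrix of multiplication
  by \<open>a\<close> on the generators of \<open>S\<close>, hence a root of its monic characteristic polynomial.\<close>

lemma algebraic_int_if_int_span_closed:
  fixes a :: "'a::field_char_0"
  assumes fin: "finite S" and one: "1 \<in> S" and closed: "\<And>s. s \<in> S \<Longrightarrow> a * s \<in> int_module.span S"
  shows "algebraic_int a"
proof -
  obtain vs where vs: "distinct vs" "set vs = S" using finite_distinct_list[OF fin] by blast
  define n where "n = length vs"
  have "\<forall>s\<in>S. \<exists>c. a * s = (\<Sum>t\<in>S. of_int (c t) * t)"
    using closed int_module.span_finite[OF fin] by auto
  then obtain C where C: "\<And>s. s \<in> S \<Longrightarrow> a * s = (\<Sum>t\<in>S. of_int (C s t) * t)"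
    by metis
  define A :: "int mat" where "A = mat n n (\<lambda>(i,j). C (vs ! i) (vs ! j))"
  define Aa :: "'a mat" where "Aa = map_mat of_int A"
  define v :: "'a vec" where "v = vec n (\<lambda>j. vs ! j)"
  have A: "A \<in> carrier_mat n n" and Aa: "Aa \<in> carrier_mat n n" by (simp_all add: A_def Aa_def)
  have "Aa *\<^sub>v v = a \<cdot>\<^sub>v v"
  proof (rule eq_vecI)
    fix i assume "i < dim_vec (a \<cdot>\<^sub>v v)"
    then have i: "i < n" by (simp add: v_def)
    have "(Aa *\<^sub>v v) $ i = (\<Sum>j<n. of_int (C (vs ! i) (vs ! j)) * vs ! j)"
      using i by (simp add: Aa_def A_def v_def mult_mat_vec_def scalar_prod_def atLeast0LessThan)
    also have "\<dots> = sum_list (map (\<lambda>t. of_int (C (vs ! i) t) * t) vs)"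
      by (simp add: sum_list_sum_nth atLeast0LessThan n_def)
    also have "\<dots> = (\<Sum>t\<in>S. of_int (C (vs ! i) t) * t)"
      by (metis vs sum.distinct_set_conv_list)
    also have "\<dots> = a * vs ! i" using C[of "vs ! i"] i vs n_def by auto
    finally show "(Aa *\<^sub>v v) $ i = (a \<cdot>\<^sub>v v) $ i" using i by (simp add: v_def)
  qed (simp add: Aa_def A_def v_def)
  moreover have "v \<noteq> 0\<^sub>v n"
  proof -
    obtain j where "j < n" "vs ! j = 1" using one vs n_def by (metis in_set_conv_nth)
    then have "v $ j \<noteq> 0\<^sub>v n $ j" by (simp add: v_def)
    then show ?thesis by metis
  qed
  ultimately have "eigenvalue Aa a"
    unfolding eigenvalue_def eigenvector_def using Aa by (auto simp: v_def intro!: exI[of _ v])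
  moreover have "char_poly Aa = map_poly of_int (char_poly A)"
    unfolding Aa_def by (rule of_int_hom.char_poly_hom[OF A])
  ultimately have "poly (map_poly of_int (char_poly A)) a = 0"
    using eigenvalue_root_char_poly[OF Aa] by simp
  moreover have "lead_coeff (char_poly A) = 1"
    using degree_monic_char_poly[OF A] by simp
  ultimately show ?thesis unfolding algebraic_int_altdef_ipoly by auto
qed

lemma int_span_powers_closed:
  fixes y :: "'a::comm_ring_1"
  assumes "y ^ n \<in> int_module.span ((\<lambda>i. y ^ i) ` {..<n})"
  shows "y ^ k \<in> int_module.span ((\<lambda>i. y ^ i) ` {..<n})"
proof (induction k)
  case 0
  show ?case
    using assms by (cases n) (force intro: int_module.span_base)+
next
  case (Suc k)
  have "y * s \<in> int_module.span ((\<lambda>i. y ^ i) ` {..<n})" if s: "s \<in> (\<lambda>i. y ^ i) ` {..<n}" for s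
  proof -
    obtain i where i: "i < n" "s = y ^ i" using s by blast
    show ?thesis
    proof (cases "Suc i < n")
      case True
      then show ?thesis using i by (auto intro!: int_module.span_base rev_image_eqI[of "Suc i"])
    next
      case False
      then show ?thesis using i assms by (metis Suc_lessI power_Suc)
    qed
  qed
  then show ?case using int_span_mult_closed[OF Suc] by simp
qed

lemma algebraic_int_iff_power_in_int_span:
  fixes y :: "'a::field_char_0"
  shows "algebraic_int y \<longleftrightarrow> (\<exists>n. y ^ n \<in> int_module.span ((\<lambda>i. y ^ i) ` {..<n}))"
proof
  assume "algebraic_int y"
  then obtain p where p: "lead_coeff p = 1" "\<forall>i. coeff p i \<in> \<int>" "poly p y = 0"
    by (auto elim: algebraic_int.cases)
  define n where "n = degree p"
  have "0 = (\<Sum>i\<le>n. coeff p i * y ^ i)" using p(3) by (simp add: poly_altdef n_def)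
  also have "\<dots> = y ^ n + (\<Sum>i<n. coeff p i * y ^ i)"
    using p(1) by (simp add: lessThan_Suc_atMost[symmetric] n_def)
  finally have "y ^ n = - (\<Sum>i<n. coeff p i * y ^ i)" by (simp add: eq_neg_iff_add_eq_0)
  also have "\<dots> \<in> int_module.span ((\<lambda>i. y ^ i) ` {..<n})"
  proof (intro int_module.span_neg int_module.span_sum)
    fix i assume "i \<in> {..<n}"
    moreover obtain c where "coeff p i = of_int c" using p(2) Ints_cases by metis
    ultimately show "coeff p i * y ^ i \<in> int_module.span ((\<lambda>i. y ^ i) ` {..<n})"
      by (auto intro: int_module.span_scale int_module.span_base)
  qed
  finally show "\<exists>n. y ^ n \<in> int_module.span ((\<lambda>i. y ^ i) ` {..<n})" by blast
next
  assume "\<exists>n. y ^ n \<in> int_module.span ((\<lambda>i. y ^ i) ` {..<n})"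
  then obtain n where n: "y ^ n \<in> int_module.span ((\<lambda>i. y ^ i) ` {..<n})" by blast
  then have "n > 0" by (cases n) auto
  show "algebraic_int y"
  proof (rule algebraic_int_if_int_span_closed)
    show "1 \<in> (\<lambda>i. y ^ i) ` {..<n}" using \<open>n > 0\<close> by force
    show "y * s \<in> int_module.span ((\<lambda>i. y ^ i) ` {..<n})" if "s \<in> (\<lambda>i. y ^ i) ` {..<n}" for s
      using that int_span_powers_closed[OF n, of "Suc _"] by auto
  qed simp
qed

lemma algebraic_int_powers_in_int_span:
  fixes y :: "'a::field_char_0"
  assumes "algebraic_int y"
  obtains n where "n > 0" and "\<And>k. y ^ k \<in> int_module.span ((\<lambda>i. y ^ i) ` {..<n})"
proof -
  obtain n where n: "y ^ n \<in> int_module.span ((\<lambda>i. y ^ i) ` {..<n})"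
    using assms algebraic_int_iff_power_in_int_span by blast
  then have "n > 0" by (cases n) auto
  with int_span_powers_closed[OF n] show thesis using that by blast
qed

lemma
  fixes a b :: "'a::field_char_0"
  assumes a: "algebraic_int a" and b: "algebraic_int b"
  shows algebraic_int_add: "algebraic_int (a + b)"
    and algebraic_int_mult: "algebraic_int (a * b)"
proof -
  obtain n where n: "n > 0" "\<And>k. a ^ k \<in> int_module.span ((\<lambda>i. a ^ i) ` {..<n})"
    using algebraic_int_powers_in_int_span[OF a] by blast
  obtain m where m: "m > 0" "\<And>k. b ^ k \<in> int_module.span ((\<lambda>i. b ^ i) ` {..<m})"
    using algebraic_int_powers_in_int_span[OF b] by blast
  define S where "S = (\<lambda>(i, j). a ^ i * b ^ j) ` ({..<n} \<times> {..<m})"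
  have "finite S" by (simp add: S_def)
  have "1 \<in> S" using n(1) m(1) by (force simp: S_def)
  have all: "a ^ i * b ^ j \<in> int_module.span S" for i j
  proof -
    have "a ^ i' * b ^ j \<in> int_module.span S" if "i' < n" for i'
      by (rule int_span_mult_closed[OF m(2)])
        (use that in \<open>force simp: S_def intro: int_module.span_base\<close>)
    then have "b ^ j * a ^ i \<in> int_module.span S"
      by (intro int_span_mult_closed[OF n(2)]) (auto simp: mult.commute)
    then show ?thesis by (simp add: mult.commute)
  qed
  show "algebraic_int (a + b)"
  proof (rule algebraic_int_if_int_span_closed[OF \<open>finite S\<close> \<open>1 \<in> S\<close>])
    fix s assume "s \<in> S"
    then obtain i j where s: "s = a ^ i * b ^ j" by (auto simp: S_def)
    have "(a + b) * s = a ^ Suc i * b ^ j + a ^ i * b ^ Suc j" by (simp add: s algebra_simps)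
    then show "(a + b) * s \<in> int_module.span S"
      using all[of "Suc i" j] all[of i "Suc j"] by (metis int_module.span_add)
  qed
  show "algebraic_int (a * b)"
  proof (rule algebraic_int_if_int_span_closed[OF \<open>finite S\<close> \<open>1 \<in> S\<close>])
    fix s assume "s \<in> S"
    then obtain i j where s: "s = a ^ i * b ^ j" by (auto simp: S_def)
    have "(a * b) * s = a ^ Suc i * b ^ Suc j" by (simp add: s algebra_simps)
    then show "(a * b) * s \<in> int_module.span S" using all[of "Suc i" "Suc j"] by metis
  qed
qed

text \<open>Clearing the leading coefficient \<open>c\<close> of an integer polynomial \<open>p\<close> with \<open>p(x) = 0\<close>:
  \<open>c\<^sup>n\<^sup>-\<^sup>1 p(x) = 0\<close> is a monic relation for \<open>c x\<close>.\<close>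

lemma algebraic_imp_algebraic_int_multiple:
  fixes x :: "'a::field_char_0"
  assumes "algebraic x"
  obtains m :: nat where "m > 0" and "algebraic_int (of_nat m * x)"
proof -
  from assms obtain p where p: "\<And>i. coeff p i \<in> \<int>" "p \<noteq> 0" "poly p x = 0"
    unfolding algebraic_def by blast
  define n where "n = degree p"
  define c where "c = lead_coeff p"
  define y where "y = c * x"
  have "c \<noteq> 0" using p(2) by (simp add: c_def)
  have "n > 0"
  proof (rule ccontr)
    assume "\<not> n > 0"
    then have "p = [:c:]" by (simp add: n_def c_def degree_0_id)
    with p(3) \<open>c \<noteq> 0\<close> show False by simp
  qed
  have scale: "c ^ (n - 1) * (coeff p i * x ^ i) = coeff p i * c ^ (n - 1 - i) * y ^ i" if "i < n" for i
  proof -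
    have "c ^ (n - 1) = c ^ (n - 1 - i) * c ^ i" using that by (simp flip: power_add)
    then show ?thesis by (simp add: y_def power_mult_distrib)
  qed
  have "0 = (\<Sum>i\<le>n. coeff p i * x ^ i)" using p(3) by (simp add: poly_altdef n_def)
  also have "\<dots> = c * x ^ n + (\<Sum>i<n. coeff p i * x ^ i)"
    by (simp add: lessThan_Suc_atMost[symmetric] c_def n_def)
  finally have rel: "c * x ^ n = - (\<Sum>i<n. coeff p i * x ^ i)" by (simp add: eq_neg_iff_add_eq_0)
  have "y ^ n = c ^ (n - 1) * (c * x ^ n)"
    using \<open>n > 0\<close> by (simp add: y_def power_mult_distrib) (metis Suc_pred power_Suc2)
  also have "\<dots> = - (\<Sum>i<n. c ^ (n - 1) * (coeff p i * x ^ i))"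
    by (simp add: rel sum_distrib_left)
  also have "\<dots> = - (\<Sum>i<n. coeff p i * c ^ (n - 1 - i) * y ^ i)"
    using scale by (intro arg_cong[where f = uminus] sum.cong) auto
  also have "\<dots> \<in> int_module.span ((\<lambda>i. y ^ i) ` {..<n})"
  proof (intro int_module.span_neg int_module.span_sum)
    fix i assume "i \<in> {..<n}"
    moreover obtain d where "coeff p i * c ^ (n - 1 - i) = of_int d"
      using p(1) \<open>c \<noteq> 0\<close> by (metis Ints_cases Ints_mult Ints_power c_def)
    ultimately show "coeff p i * c ^ (n - 1 - i) * y ^ i \<in> int_module.span ((\<lambda>i. y ^ i) ` {..<n})"
      by (auto intro: int_module.span_scale int_module.span_base)
  qed
  finally have "algebraic_int y" using algebraic_int_iff_power_in_int_span by blast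
  obtain k where k: "c = of_int k" using p(1) c_def Ints_cases by metis
  have "of_nat (nat \<bar>k\<bar>) * x = y \<or> of_nat (nat \<bar>k\<bar>) * x = - y"
    by (simp add: y_def k abs_if)
  then show thesis
    using that[of "nat \<bar>k\<bar>"] \<open>algebraic_int y\<close> \<open>c \<noteq> 0\<close> k by auto
qed

section \<open>Number fields and S-integers\<close>

lemma
  assumes "subfield_C K"
  shows subfield_C_zero: "0 \<in> K" and subfield_C_one: "1 \<in> K"
    and subfield_C_add: "x \<in> K \<Longrightarrow> y \<in> K \<Longrightarrow> x + y \<in> K"
    and subfield_C_diff: "x \<in> K \<Longrightarrow> y \<in> K \<Longrightarrow> x - y \<in> K"
    and subfield_C_mult: "x \<in> K \<Longrightarrow> y \<in> K \<Longrightarrow> x * y \<in> K"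
    and subfield_C_inverse: "x \<in> K \<Longrightarrow> inverse x \<in> K"
  using assms by (auto simp: subfield_C_def)

lemma subfield_C_divide: "subfield_C K \<Longrightarrow> x \<in> K \<Longrightarrow> y \<in> K \<Longrightarrow> x / y \<in> K"
  by (simp add: divide_inverse subfield_C_mult subfield_C_inverse)

lemma subfield_C_uminus: "subfield_C K \<Longrightarrow> x \<in> K \<Longrightarrow> - x \<in> K"
  using subfield_C_diff[of K 0 x] subfield_C_zero by simp

lemma subfield_C_of_int: "subfield_C K \<Longrightarrow> of_int n \<in> K"
proof -
  assume K: "subfield_C K"
  have "of_nat m \<in> K" for m by (induction m) (auto simp: K subfield_C_zero subfield_C_one subfield_C_add)
  then show ?thesis by (cases n rule: int_cases2) (auto intro: subfield_C_uminus[OF K])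
qed

lemma subfield_C_sum: "subfield_C K \<Longrightarrow> (\<And>a. a \<in> A \<Longrightarrow> f a \<in> K) \<Longrightarrow> sum f A \<in> K"
  by (induction A rule: infinite_finite_induct) (auto simp: subfield_C_zero subfield_C_add)

lemma subfield_C_prod: "subfield_C K \<Longrightarrow> (\<And>a. a \<in> A \<Longrightarrow> f a \<in> K) \<Longrightarrow> prod f A \<in> K"
  by (induction A rule: infinite_finite_induct) (auto simp: subfield_C_one subfield_C_mult)

lemma subfield_C_power: "subfield_C K \<Longrightarrow> x \<in> K \<Longrightarrow> x ^ n \<in> K"
  by (induction n) (auto simp: subfield_C_one subfield_C_mult)

lemma algebraic_if_power_eq:
  fixes x :: "'a::field_char_0"
  assumes "x ^ a = x ^ b" and "a \<noteq> b"
  shows "algebraic x"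
proof (rule algebraicI)
  show "poly (monom 1 a - monom 1 b) x = 0" using assms(1) by (simp add: poly_monom)
  have "coeff (monom 1 a - monom 1 b) a = (1 :: 'a)" using assms(2) by simp
  then show "monom 1 a - monom 1 b \<noteq> (0 :: 'a poly)" by (metis coeff_0 zero_neq_one)
qed simp

interpretation rat_space: Vector_Spaces.vector_space "\<lambda>(q::rat) (z::complex). of_rat q * z"
  by unfold_locales (simp_all add: algebra_simps of_rat_add of_rat_mult)

lemma number_field_subset_rat_span:
  assumes "number_field K"
  obtains B where "finite B" and "K \<subseteq> rat_space.span B"
proof -
  from assms obtain B where B: "finite B"
    "\<And>y. y \<in> K \<Longrightarrow> \<exists>c. (\<forall>b\<in>B. c b \<in> \<rat>) \<and> y = (\<Sum>b\<in>B. c b * b)"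
    unfolding number_field_def by blast
  have "y \<in> rat_space.span B" if "y \<in> K" for y
  proof -
    obtain c where c: "\<forall>b\<in>B. c b \<in> \<rat>" "y = (\<Sum>b\<in>B. c b * b)" using B(2) \<open>y \<in> K\<close> by blast
    have "\<forall>b\<in>B. \<exists>q. c b = of_rat q" using c(1) by (auto simp: Rats_def)
    then obtain u where "\<And>b. b \<in> B \<Longrightarrow> c b = of_rat (u b)" by metis
    then have "y = (\<Sum>b\<in>B. of_rat (u b) * b)" using c(2) by simp
    then show "y \<in> rat_space.span B" unfolding rat_space.span_finite[OF B(1)] by blast
  qed
  with B(1) show thesis using that by blast
qed

text \<open>The powers \<open>x\<^sup>0, \<dots>, x\<^sup>d\<close>, \<open>d = card B\<close>, either repeat or are \<open>\<rat>\<close>-linearly dependent.\<close>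

lemma algebraic_if_powers_in_finite_rat_span:
  assumes B: "finite B" and x: "\<And>i. x ^ i \<in> rat_space.span B"
  shows "algebraic x"
proof (cases "inj_on (\<lambda>i. x ^ i) {..card B}")
  case False
  then obtain a b where "x ^ a = x ^ b" "a \<noteq> b" unfolding inj_on_def by blast
  then show ?thesis by (rule algebraic_if_power_eq)
next
  case inj: True
  define S where "S = (\<lambda>i. x ^ i) ` {..card B}"
  have "rat_space.dependent S"
  proof (rule ccontr)
    assume "rat_space.independent S"
    moreover have "S \<subseteq> rat_space.span B" using x by (auto simp: S_def)
    ultimately have "card S \<le> card B" using rat_space.independent_span_bound[OF B] by simp
    with inj show False by (simp add: S_def card_image)
  qed
  then obtain T u where T: "T \<subseteq> S" "finite T" "(\<Sum>v\<in>T. of_rat (u v) * v) = 0"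
    and nz: "\<exists>v\<in>T. u v \<noteq> 0"
    using rat_space.independent_explicit_finite_subsets[of S] by auto
  define I where "I = {i. i \<le> card B \<and> x ^ i \<in> T}"
  define q :: "complex poly" where "q = (\<Sum>i\<in>I. monom (of_rat (u (x ^ i))) i)"
  have coeff_q: "coeff q i = (if i \<in> I then of_rat (u (x ^ i)) else 0)" for i
    by (simp add: q_def coeff_sum I_def)
  have T_eq: "T = (\<lambda>i. x ^ i) ` I" using T(1) unfolding S_def I_def by blast
  have inj_I: "inj_on (\<lambda>i. x ^ i) I" by (rule inj_on_subset[OF inj]) (auto simp: I_def)
  have "poly q x = (\<Sum>i\<in>I. of_rat (u (x ^ i)) * x ^ i)"
    by (simp add: q_def poly_sum poly_monom)
  also have "\<dots> = (\<Sum>v\<in>T. of_rat (u v) * v)"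
    unfolding T_eq using inj_I by (simp add: sum.reindex)
  finally have "poly q x = 0" using T(3) by simp
  moreover have "q \<noteq> 0"
  proof -
    obtain i where "i \<in> I" "u (x ^ i) \<noteq> 0" using nz T_eq by blast
    then have "coeff q i \<noteq> 0" by (simp add: coeff_q)
    then show ?thesis by auto
  qed
  moreover have "coeff q i \<in> \<rat>" for i by (simp add: coeff_q)
  ultimately show ?thesis by (intro algebraicI'[of q])
qed

lemma number_field_algebraic:
  assumes "number_field K" and "x \<in> K"
  shows "algebraic x"
proof -
  obtain B where "finite B" "K \<subseteq> rat_space.span B"
    using number_field_subset_rat_span[OF assms(1)] by blast
  moreover have "x ^ i \<in> K" for i
    using assms by (simp add: number_field_def subfield_C_power)
  ultimately show ?thesis using algebraic_if_powers_in_finite_rat_span by blast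
qed

lemma
  assumes K: "subfield_C K" and x: "x \<in> S_integers K N" and y: "y \<in> S_integers K N"
  shows S_integers_add: "x + y \<in> S_integers K N"
    and S_integers_mult: "x * y \<in> S_integers K N"
proof -
  obtain a b where a: "algebraic_int (of_nat N ^ a * x)" and b: "algebraic_int (of_nat N ^ b * y)"
    and "x \<in> K" "y \<in> K"
    using x y by (auto simp: S_integers_def)
  have "of_nat N ^ (a + b) * (x + y) = of_nat (N ^ b) * (of_nat N ^ a * x) + of_nat (N ^ a) * (of_nat N ^ b * y)"
    by (simp add: power_add algebra_simps)
  also have "algebraic_int \<dots>" by (intro algebraic_int_add algebraic_int_mult[OF algebraic_int_of_nat] a b)
  finally show "x + y \<in> S_integers K N"
    using \<open>x \<in> K\<close> \<open>y \<in> K\<close> K by (auto simp: S_integers_def subfield_C_add)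
  have "of_nat N ^ (a + b) * (x * y) = (of_nat N ^ a * x) * (of_nat N ^ b * y)"
    by (simp add: power_add algebra_simps)
  also have "algebraic_int \<dots>" using a b by (rule algebraic_int_mult)
  finally show "x * y \<in> S_integers K N"
    using \<open>x \<in> K\<close> \<open>y \<in> K\<close> K by (auto simp: S_integers_def subfield_C_mult)
qed

lemma S_integers_uminus: "subfield_C K \<Longrightarrow> x \<in> S_integers K N \<Longrightarrow> - x \<in> S_integers K N"
  by (auto simp: S_integers_def subfield_C_uminus)

lemma S_integers_diff:
  "subfield_C K \<Longrightarrow> x \<in> S_integers K N \<Longrightarrow> y \<in> S_integers K N \<Longrightarrow> x - y \<in> S_integers K N"
  using S_integers_add[of K x N "- y"] S_integers_uminus by simp

lemma S_integers_of_int: "subfield_C K \<Longrightarrow> of_int n \<in> S_integers K N"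
  by (auto simp: S_integers_def subfield_C_of_int intro!: exI[of _ "0::nat"])

lemma S_integers_of_nat: "subfield_C K \<Longrightarrow> of_nat n \<in> S_integers K N"
  using S_integers_of_int[of K "int n"] by simp

lemma S_integers_sum:
  "subfield_C K \<Longrightarrow> (\<And>a. a \<in> A \<Longrightarrow> f a \<in> S_integers K N) \<Longrightarrow> sum f A \<in> S_integers K N"
  by (induction A rule: infinite_finite_induct)
    (auto simp: S_integers_add S_integers_of_nat[where n = 0, simplified])

lemma S_integers_prod:
  "subfield_C K \<Longrightarrow> (\<And>a. a \<in> A \<Longrightarrow> f a \<in> S_integers K N) \<Longrightarrow> prod f A \<in> S_integers K N"
  by (induction A rule: infinite_finite_induct)
    (auto simp: S_integers_mult S_integers_of_nat[where n = 1, simplified])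

lemma S_integers_mono:
  assumes "x \<in> S_integers K N" and "N dvd N'"
  shows "x \<in> S_integers K N'"
proof -
  obtain a where a: "algebraic_int (of_nat N ^ a * x)" and "x \<in> K"
    using assms(1) by (auto simp: S_integers_def)
  obtain t where t: "N' = N * t" using assms(2) by blast
  have "of_nat N' ^ a * x = of_nat (t ^ a) * (of_nat N ^ a * x)" by (simp add: t power_mult_distrib)
  also have "algebraic_int \<dots>" using a by (rule algebraic_int_mult[OF algebraic_int_of_nat])
  finally show ?thesis using \<open>x \<in> K\<close> by (auto simp: S_integers_def)
qed

lemma number_field_finite_subset_S_integers:
  assumes nf: "number_field K" and "finite X" "X \<subseteq> K" and "M > 0"
  obtains N where "N > 0" "M dvd N" "X \<subseteq> S_integers K N"
proof -
  have "\<exists>m > 0. x \<in> S_integers K m" if x: "x \<in> X" for x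
  proof -
    have "algebraic x" using number_field_algebraic[OF nf] x assms(3) by blast
    then obtain m where m: "m > 0" "algebraic_int (of_nat m * x)"
      by (rule algebraic_imp_algebraic_int_multiple)
    then have "algebraic_int (of_nat m ^ 1 * x)" by simp
    then have "x \<in> S_integers K m" using x assms(3) unfolding S_integers_def by blast
    with m(1) show ?thesis by blast
  qed
  then obtain m where m: "\<And>x. x \<in> X \<Longrightarrow> m x > 0" "\<And>x. x \<in> X \<Longrightarrow> x \<in> S_integers K (m x)"
    by metis
  show thesis
  proof
    show "M * (\<Prod>x\<in>X. m x) > 0" using m(1) assms(4) by (simp add: prod_pos)
    show "X \<subseteq> S_integers K (M * (\<Prod>x\<in>X. m x))"
    proof
      fix x assume "x \<in> X"
      then have "m x dvd M * (\<Prod>x\<in>X. m x)" using assms(2) by (simp add: dvd_prodI)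
      with m(2)[OF \<open>x \<in> X\<close>] show "x \<in> S_integers K (M * (\<Prod>x\<in>X. m x))"
        by (rule S_integers_mono)
    qed
  qed simp
qed

lemma S_unit_of_nat_power:
  assumes K: "subfield_C K" and "q dvd N" and "q \<noteq> 0"
  shows "S_unit K N (of_nat q ^ a)"
proof -
  obtain t where t: "N = q * t" using assms(2) by blast
  have "of_nat N ^ a * inverse (of_nat q ^ a :: complex) = of_nat (t ^ a)"
    using assms(3) by (simp add: t field_simps)
  then have "algebraic_int (of_nat N ^ a * inverse (of_nat q ^ a :: complex))"
    by (simp only: algebraic_int_of_nat)
  moreover have "inverse (of_nat q ^ a :: complex) \<in> K"
    using subfield_C_inverse[OF K subfield_C_of_int[OF K, of "int q ^ a"]] by simp
  ultimately have "inverse (of_nat q ^ a :: complex) \<in> S_integers K N"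
    unfolding S_integers_def by blast
  then show ?thesis using S_integers_of_nat[OF K, of "q ^ a"] assms(3) by (simp add: S_unit_def)
qed

lemma algebraic_int_poly_of_int: "algebraic_int a \<Longrightarrow> algebraic_int (poly (of_int_poly p) a)"
  for a :: "'a::field_char_0"
  by (induction p) (simp_all add: of_int_hom.map_poly_pCons_hom algebraic_int_add algebraic_int_mult)

lemma algebraic_int_inverse_multiple:
  fixes a :: "'a::field_char_0"
  assumes "algebraic_int a" and "a \<noteq> 0"
  obtains n :: int where "n \<noteq> 0" and "algebraic_int (of_int n / a)"
proof -
  have "\<exists>n::int. n \<noteq> 0 \<and> algebraic_int (of_int n / a)"
    if "p \<noteq> 0" and "poly (of_int_poly p) a = 0" for p
    using that
  proof (induction p rule: pCons_induct)
    case (pCons c q)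
    have rel: "of_int c + a * poly (of_int_poly q) a = 0"
      using pCons.prems(2) by (simp add: of_int_hom.map_poly_pCons_hom)
    show ?case
    proof (cases "c = 0")
      case False
      have "of_int c / a = - poly (of_int_poly q) a"
        using rel assms(2) by (simp add: field_simps eq_neg_iff_add_eq_0)
      then show ?thesis
        using False algebraic_int_poly_of_int[OF assms(1), of q] by (intro exI[of _ c]) simp
    next
      case True
      then show ?thesis using pCons rel assms(2) by simp
    qed
  qed simp
  moreover obtain p where "poly (of_int_poly p) a = 0" "lead_coeff p = 1"
    using assms(1) unfolding algebraic_int_altdef_ipoly by blast
  moreover from this(2) have "p \<noteq> 0" by auto
  ultimately show thesis using that by blast
qed

lemma S_integers_inverse_multiple:
  assumes K: "subfield_C K" and m: "m \<in> S_integers K N" "m \<noteq> 0" and "N > 0"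
  obtains n :: int where "n \<noteq> 0" and "of_int n / m \<in> S_integers K N"
proof -
  obtain k where k: "algebraic_int (of_nat N ^ k * m)" and "m \<in> K"
    using m(1) by (auto simp: S_integers_def)
  obtain n :: int where n: "n \<noteq> 0" "algebraic_int (of_int n / (of_nat N ^ k * m))"
    using algebraic_int_inverse_multiple[OF k] m(2) \<open>N > 0\<close> by auto
  have "of_int n / m = of_nat (N ^ k) * (of_int n / (of_nat N ^ k * m))"
    using \<open>N > 0\<close> by (simp add: field_simps)
  also have "algebraic_int \<dots>" using n(2) by (rule algebraic_int_mult[OF algebraic_int_of_nat])
  finally have "algebraic_int (of_int n / m)" .
  moreover have "of_int n / m \<in> K" using K \<open>m \<in> K\<close> by (intro subfield_C_divide subfield_C_of_int)
  ultimately have "of_int n / m \<in> S_integers K N" by (auto simp: S_integers_def intro!: exI[of _ "0::nat"])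
  with n(1) show thesis by (rule that)
qed

lemma exists_power_diff_dvd:
  fixes n q :: int
  assumes "n \<noteq> 0"
  obtains e a where "e > 0" and "n dvd q ^ a * (q ^ e - 1)"
proof -
  define f where "f = (\<lambda>k::nat. q ^ k mod \<bar>n\<bar>)"
  have "f ` {..nat \<bar>n\<bar>} \<subseteq> {0..<\<bar>n\<bar>}" using assms by (auto simp: f_def)
  then have "card (f ` {..nat \<bar>n\<bar>}) \<le> card {0..<\<bar>n\<bar>}" by (intro card_mono) auto
  then have "\<not> inj_on f {..nat \<bar>n\<bar>}"
    by (auto dest!: card_image)
  then obtain a b where "a \<noteq> b" "f a = f b" unfolding inj_on_def by blast
  then obtain a b where "a < b" "f a = f b" by (cases "a < b") (auto simp: not_less_iff_gr_or_eq)
  then have "n dvd q ^ b - q ^ a" by (simp add: f_def mod_eq_dvd_iff dvd_diff_commute)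
  also have "q ^ b - q ^ a = q ^ a * (q ^ (b - a) - 1)"
    using \<open>a < b\<close> by (simp add: algebra_simps flip: power_add)
  finally show thesis using \<open>a < b\<close> that[of "b - a" a] by simp
qed

lemma S_integers_power_congruent_one:
  assumes K: "subfield_C K" and "q dvd N" "q \<noteq> 0" "N > 0"
    and m: "m \<in> S_integers K N" "m \<noteq> 0"
  obtains e where "e > 0" and "\<And>k. (of_nat q ^ (e * k) - 1) / m \<in> S_integers K N"
proof -
  obtain n :: int where n: "n \<noteq> 0" "of_int n / m \<in> S_integers K N"
    using S_integers_inverse_multiple[OF K m \<open>N > 0\<close>] by blast
  obtain e a where "e > 0" and "n dvd int q ^ a * (int q ^ e - 1)"
    using exists_power_diff_dvd[OF n(1)] by blast
  then obtain t where "int q ^ a * (int q ^ e - 1) = n * t" by blast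
  then have "(of_int (int q ^ a * (int q ^ e - 1)) :: complex) = of_int (n * t)" by (rule arg_cong)
  then have t: "of_nat q ^ e - 1 = (of_int n * of_int t * inverse (of_nat q ^ a) :: complex)"
    using \<open>q \<noteq> 0\<close> by (simp add: field_simps)
  show thesis
  proof (rule that[OF \<open>e > 0\<close>])
    fix k
    define G where "G = (\<Sum>i<k. (of_nat q ^ e) ^ i :: complex)"
    have "(of_nat q ^ (e * k) - 1 :: complex) = (of_nat q ^ e - 1) * G"
      by (simp add: G_def power_mult power_diff_1_eq)
    then have "(of_nat q ^ (e * k) - 1) / m = (of_int n / m) * (of_int t * G * inverse (of_nat q ^ a))"
      using t by simp
    also have "\<dots> \<in> S_integers K N"
    proof (intro S_integers_mult[OF K] n(2))
      show "of_int t \<in> S_integers K N" by (rule S_integers_of_int[OF K])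
      show "G \<in> S_integers K N" unfolding G_def
        using S_integers_of_nat[OF K, of "(q ^ e) ^ i" for i] by (intro S_integers_sum[OF K]) simp
      show "inverse (of_nat q ^ a) \<in> S_integers K N"
        using S_unit_of_nat_power[OF K \<open>q dvd N\<close> \<open>q \<noteq> 0\<close>, of a] by (simp add: S_unit_def)
    qed
    finally show "(of_nat q ^ (e * k) - 1) / m \<in> S_integers K N" .
  qed
qed

lemma S_integers_power_congruent_one_finite:
  assumes K: "subfield_C K" and "q dvd N" "q \<noteq> 0" "N > 0"
    and m: "finite L" "\<And>l. l \<in> L \<Longrightarrow> m l \<in> S_integers K N" "\<And>l. l \<in> L \<Longrightarrow> m l \<noteq> 0"
  obtains e where "e > 0" and "\<And>l k. l \<in> L \<Longrightarrow> (of_nat q ^ (e * k) - 1) / m l \<in> S_integers K N"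
proof -
  have "prod m L \<in> S_integers K N" "prod m L \<noteq> 0"
    using m by (auto intro: S_integers_prod[OF K])
  then obtain e where "e > 0" and e: "\<And>k. (of_nat q ^ (e * k) - 1) / prod m L \<in> S_integers K N"
    using S_integers_power_congruent_one[OF assms(1-4)] by blast
  show thesis
  proof (rule that[OF \<open>e > 0\<close>])
    fix l k assume "l \<in> L"
    then have "prod m L = m l * prod m (L - {l})" using m(1) by (simp add: prod.remove)
    then have "(of_nat q ^ (e * k) - 1) / m l = (of_nat q ^ (e * k) - 1) / prod m L * prod m (L - {l})"
      using \<open>prod m L \<noteq> 0\<close> by (simp add: field_simps)
    also have "\<dots> \<in> S_integers K N"
      by (rule S_integers_mult[OF K e S_integers_prod[OF K]]) (use m(2) in auto)
    finally show "(of_nat q ^ (e * k) - 1) / m l \<in> S_integers K N" .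
  qed
qed

section \<open>Homogeneous polynomials and Zariski density\<close>

lemma finite_monomials: "finite (monomials d)"
proof -
  have "monomials d \<subseteq> (\<lambda>g j. if j < 4 then g j else 0) ` ({..<4} \<rightarrow>\<^sub>E {..d})"
  proof
    fix \<alpha> assume \<alpha>: "\<alpha> \<in> monomials d"
    then have "\<alpha> j \<le> d" if "j < 4" for j
      using that member_le_sum[of j "{..<4}" \<alpha>] by (simp add: monomials_def)
    then have "restrict \<alpha> {..<4} \<in> {..<4} \<rightarrow>\<^sub>E {..d}" by auto
    moreover have "\<alpha> = (\<lambda>j. if j < 4 then restrict \<alpha> {..<4} j else 0)"
      using \<alpha> by (auto simp: monomials_def)
    ultimately show "\<alpha> \<in> (\<lambda>g j. if j < 4 then g j else 0) ` ({..<4} \<rightarrow>\<^sub>E {..d})" by blast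
  qed
  then show ?thesis by (rule finite_subset) (intro finite_imageI finite_PiE; simp)
qed

lemma hpoly_eval_cong: "(\<And>j. j < 4 \<Longrightarrow> x j = x' j) \<Longrightarrow> hpoly_eval d c x = hpoly_eval d c x'"
  unfolding hpoly_eval_def by (intro sum.cong refl arg_cong2[where f = "(*)"] prod.cong) auto

lemma hpoly_eval_homogeneous: "hpoly_eval d c (\<lambda>j. t * x j) = t ^ d * hpoly_eval d c x"
proof -
  have "(\<Prod>j<4. (t * x j) ^ \<alpha> j) = t ^ d * (\<Prod>j<4. x j ^ \<alpha> j)" if "\<alpha> \<in> monomials d" for \<alpha>
  proof -
    have "(\<Prod>j<4. (t * x j) ^ \<alpha> j) = (\<Prod>j<4. t ^ \<alpha> j) * (\<Prod>j<4. x j ^ \<alpha> j)"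
      by (simp add: power_mult_distrib prod.distrib)
    also have "(\<Prod>j<4. t ^ \<alpha> j) = t ^ d" using that by (simp add: monomials_def flip: power_sum)
    finally show ?thesis .
  qed
  then show ?thesis unfolding hpoly_eval_def sum_distrib_left
    by (intro sum.cong) (auto simp: algebra_simps)
qed

lemma hpoly_eval_on_line: "\<exists>q. \<forall>s. hpoly_eval d c (\<lambda>j. a j + s * b j) = poly q s"
proof
  show "\<forall>s. hpoly_eval d c (\<lambda>j. a j + s * b j) =
      poly (\<Sum>\<alpha>\<in>monomials d. Polynomial.smult (c \<alpha>) (\<Prod>j<4. [:a j, b j:] ^ \<alpha> j)) s"
    by (simp add: hpoly_eval_def poly_sum poly_prod algebra_simps)
qed

lemma polynomial_vanishing_on_infinite_set:
  fixes f :: "complex \<Rightarrow> complex"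
  assumes "\<And>s. f s = poly q s" and "infinite Z" and "\<And>s. s \<in> Z \<Longrightarrow> f s = 0"
  shows "f s = 0"
proof -
  have "Z \<subseteq> {x. poly q x = 0}" using assms(1,3) by auto
  then have "q = 0" using assms(2) poly_roots_finite finite_subset by blast
  then show ?thesis using assms(1) by simp
qed

lemma base_digit_eq:
  fixes D a b r r' :: nat
  assumes "a < D" "b < D" "a + D * r = b + D * r'"
  shows "a = b" and "r = r'"
proof -
  have "(a + D * r) mod D = (b + D * r') mod D" using assms(3) by simp
  then show "a = b" using assms(1,2) by simp
  with assms show "r = r'" by simp
qed

text \<open>Kronecker substitution \<open>x\<^sub>j = t\<^bsup>D\<^sup>j\<^esup>\<close> with \<open>D = d + 1\<close> sends distinct monomials of degree \<open>d\<close> to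
  distinct powers of \<open>t\<close>, since their exponents are base-\<open>D\<close> digits.\<close>

lemma hpoly_eval_eq_zero_imp_coeffs_zero:
  assumes "\<And>x. hpoly_eval d c x = 0" and "\<alpha> \<in> monomials d"
  shows "c \<alpha> = 0"
proof -
  define D where "D = Suc d"
  define e where "e = (\<lambda>\<alpha>::nat \<Rightarrow> nat. \<Sum>j<4. D ^ j * \<alpha> j)"
  have digit: "\<alpha> j < D" if "\<alpha> \<in> monomials d" "j < 4" for \<alpha> j
    using that member_le_sum[of j "{..<4}" \<alpha>] by (simp add: monomials_def D_def)
  have "inj_on e (monomials d)"
  proof
    fix \<alpha> \<beta> assume \<alpha>: "\<alpha> \<in> monomials d" and \<beta>: "\<beta> \<in> monomials d" and "e \<alpha> = e \<beta>"
    then have "\<alpha> 0 + D * (\<alpha> 1 + D * (\<alpha> 2 + D * \<alpha> 3)) = \<beta> 0 + D * (\<beta> 1 + D * (\<beta> 2 + D * \<beta> 3))"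
      by (simp add: e_def numeral_eq_Suc algebra_simps)
    note eq0 = base_digit_eq[OF digit[OF \<alpha>, of 0] digit[OF \<beta>, of 0] this]
    note eq1 = base_digit_eq[OF digit[OF \<alpha>, of 1] digit[OF \<beta>, of 1] eq0(2)]
    note eq2 = base_digit_eq[OF digit[OF \<alpha>, of 2] digit[OF \<beta>, of 2] eq1(2)]
    have "\<alpha> j = \<beta> j" if "j < 4" for j
      using that eq0(1) eq1(1) eq2 by (auto simp: less_Suc_eq numeral_eq_Suc)
    moreover have "\<alpha> j = \<beta> j" if "\<not> j < 4" for j using that \<alpha> \<beta> by (simp add: monomials_def)
    ultimately show "\<alpha> = \<beta>" by blast
  qed
  define Q where "Q = (\<Sum>\<beta>\<in>monomials d. monom (c \<beta>) (e \<beta>))"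
  have "poly Q t = hpoly_eval d c (\<lambda>j. t ^ (D ^ j))" for t
  proof -
    have "(\<Prod>j<4. (t ^ (D ^ j)) ^ \<beta> j) = t ^ e \<beta>" for \<beta>
      by (simp add: e_def power_sum flip: power_mult)
    then show ?thesis by (simp add: Q_def hpoly_eval_def poly_sum poly_monom)
  qed
  then have "Q = 0" using assms(1) poly_all_0_iff_0 by auto
  have "coeff Q (e \<alpha>) = (\<Sum>\<beta>\<in>monomials d. if e \<beta> = e \<alpha> then c \<beta> else 0)"
    by (simp add: Q_def coeff_sum)
  also have "\<dots> = (\<Sum>\<beta>\<in>monomials d. if \<beta> = \<alpha> then c \<beta> else 0)"
    using \<open>inj_on e (monomials d)\<close> assms(2) by (intro sum.cong) (auto dest: inj_onD)
  also have "\<dots> = c \<alpha>" using assms(2) finite_monomials by simp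
  finally show "c \<alpha> = 0" using \<open>Q = 0\<close> by simp
qed

definition pullback :: "(nat \<Rightarrow> complex) \<Rightarrow> (nat \<Rightarrow> nat \<Rightarrow> complex) \<Rightarrow> nat \<Rightarrow> complex" where
  "pullback g B n = lin g (\<lambda>c. B c n)"

lemma lin_pullback: "lin g (\<lambda>c. lin (B c) y) = lin (pullback g B) y"
  unfolding lin_def pullback_def by (simp add: sum_distrib_left sum_distrib_right mult.assoc) (rule sum.swap)

lemma lin_fun_upd_add: "lin g (y(m := y m + s)) = lin g y + s * (if m < 4 then g m else 0)"
proof -
  have "lin g (y(m := y m + s)) = (\<Sum>j<4. g j * y j + (if j = m then s * g j else 0))"
    unfolding lin_def by (intro sum.cong) (auto simp: algebra_simps)
  then show ?thesis by (auto simp: sum.distrib lin_def)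
qed

text \<open>Eliminate \<open>w = y\<^sub>n\<^sub>0\<close>, \<open>v = y\<^sub>k\<close> and \<open>u = y\<^sub>j\<close> in turn on the chart \<open>y\<^sub>i = 1\<close>, then use
  homogeneity on \<open>y\<^sub>i \<noteq> 0\<close>, and finally leave the chart along the \<open>y\<^sub>i\<close>-line.\<close>

lemma eq_zero_if_vanishes_on_grid:
  fixes F :: "(nat \<Rightarrow> complex) \<Rightarrow> complex"
  assumes line: "\<And>y m. \<exists>q. \<forall>s. F (y(m := y m + s)) = poly q s"
    and homogeneous: "\<And>t y. F (\<lambda>n. t * y n) = t ^ d * F y"
    and local: "\<And>y y'. (\<And>n. n < 4 \<Longrightarrow> y n = y' n) \<Longrightarrow> F y = F y'"
    and S4: "{..<4} = {i, j, k, n0}" and dist: "distinct [i, j, k, n0]"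
    and W: "infinite W" and U: "infinite U" and V: "\<And>u. u \<in> U \<Longrightarrow> infinite (V u)"
    and grid: "\<And>w u v. w \<in> W \<Longrightarrow> u \<in> U \<Longrightarrow> v \<in> V u \<Longrightarrow>
      F ((\<lambda>_. 0)(i := 1, j := u, k := v, n0 := w)) = 0"
  shows "F y = 0"
proof -
  define pt where "pt = (\<lambda>w u v. (\<lambda>_. 0 :: complex)(i := 1, j := u, k := v, n0 := w))"
  have vanish_line: "F (y(m := y m + s)) = 0"
    if "infinite Z" "\<And>s. s \<in> Z \<Longrightarrow> F (y(m := y m + s)) = 0" for y m s and Z :: "complex set"
  proof -
    obtain q where "\<And>s. F (y(m := y m + s)) = poly q s" using line by blast
    from polynomial_vanishing_on_infinite_set[OF this that] show ?thesis .
  qed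
  have "F (pt w u v) = 0" if "u \<in> U" "v \<in> V u" for w u v
    using vanish_line[of W "pt 0 u v" n0 w] grid[OF _ that] W dist by (simp add: pt_def)
  then have "F (pt w u v) = 0" if "u \<in> U" for w u v
    using vanish_line[of "V u" "pt w u 0" k v] V[OF that] dist by (simp add: pt_def that fun_upd_twist)
  then have pt0: "F (pt w u v) = 0" for w u v
    using vanish_line[of U "pt w 0 v" j u] U dist by (simp add: pt_def fun_upd_twist)
  have chart: "F y = 0" if "y i \<noteq> 0" for y
  proof -
    have "F y = F (\<lambda>n. y i * pt (y n0 / y i) (y j / y i) (y k / y i) n)"
    proof (rule local)
      fix n :: nat assume "n < 4"
      then have "n \<in> {i, j, k, n0}" using S4 by blast
      then show "y n = y i * pt (y n0 / y i) (y j / y i) (y k / y i) n"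
        using that dist by (auto simp: pt_def)
    qed
    also have "\<dots> = 0" by (simp add: homogeneous pt0)
    finally show ?thesis .
  qed
  have "infinite (UNIV - {- y i})" by (simp add: infinite_UNIV_char_0)
  moreover have "F (y(i := y i + s)) = 0" if "s \<in> UNIV - {- y i}" for s
    using that by (intro chart) (simp add: add_eq_0_iff)
  ultimately show ?thesis using vanish_line[of "UNIV - {- y i}" y i 0] by simp
qed

lemma zariski_dense_P3_if_grid:
  fixes B H :: "nat \<Rightarrow> nat \<Rightarrow> complex"
  assumes inverse: "\<And>a b. a < 4 \<Longrightarrow> b < 4 \<Longrightarrow> (\<Sum>c<4. B a c * H c b) = (if a = b then 1 else 0)"
    and S4: "{..<4} = {i, j, k, n0}" and dist: "distinct [i, j, k, n0]"
    and "infinite W" "infinite U" "\<And>u. u \<in> U \<Longrightarrow> infinite (V u)"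
    and grid: "\<And>w u v. w \<in> W \<Longrightarrow> u \<in> U \<Longrightarrow> v \<in> V u \<Longrightarrow>
      (\<lambda>c. lin (B c) ((\<lambda>_. 0)(i := 1, j := u, k := v, n0 := w))) \<in> A"
  shows "zariski_dense_P3 A"
  unfolding zariski_dense_P3_def
proof (intro allI impI)
  fix d c assume vanish: "\<forall>x\<in>A. hpoly_eval d c x = 0"
  define F where "F = (\<lambda>y. hpoly_eval d c (\<lambda>c. lin (B c) y))"
  have "F y = 0" for y
  proof (rule eq_zero_if_vanishes_on_grid[where F = F and d = d, OF _ _ _ S4 dist assms(4-6)])
    show "\<exists>q. \<forall>s. F (y(m := y m + s)) = poly q s" for y m
      using hpoly_eval_on_line[of d c "\<lambda>c. lin (B c) y" "\<lambda>c. if m < 4 then B c m else 0"]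
      by (simp add: F_def lin_fun_upd_add)
  next
    show "F (\<lambda>n. t * y n) = t ^ d * F y" for t y
      by (simp add: F_def lin_def sum_distrib_left algebra_simps flip: hpoly_eval_homogeneous)
  next
    show "F y = F y'" if "\<And>n. n < 4 \<Longrightarrow> y n = y' n" for y y'
      using that by (simp add: F_def lin_def)
  qed (use vanish grid in \<open>auto simp: F_def\<close>)
  have "hpoly_eval d c x = F (\<lambda>n. lin (H n) x)" for x
  proof -
    have "lin (B a) (\<lambda>n. lin (H n) x) = x a" if "a < 4" for a
    proof -
      have "lin (B a) (\<lambda>n. lin (H n) x) = lin (\<lambda>m. \<Sum>c<4. B a c * H c m) x"
        by (subst lin_pullback) (simp add: lin_def pullback_def)
      also have "\<dots> = (\<Sum>m<4. if m = a then x m else 0)"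
        unfolding lin_def using that inverse by (intro sum.cong) auto
      also have "\<dots> = x a" using that by simp
      finally show ?thesis .
    qed
    then show ?thesis unfolding F_def by (intro hpoly_eval_cong) simp
  qed
  then show "\<forall>\<alpha>\<in>monomials d. c \<alpha> = 0"
    using \<open>\<And>y. F y = 0\<close> hpoly_eval_eq_zero_imp_coeffs_zero by metis
qed

section \<open>Coordinates adapted to the planes\<close>

lemma subfield_C_det:
  assumes K: "subfield_C K" and A: "A \<in> carrier_mat n n"
    and entries: "\<And>a b. a < n \<Longrightarrow> b < n \<Longrightarrow> A $$ (a, b) \<in> K"
  shows "det A \<in> K"
  unfolding det_def'[OF A]
proof (intro subfield_C_sum[OF K] subfield_C_mult[OF K] subfield_C_of_int[OF K] subfield_C_prod[OF K])
  fix p i assume "p \<in> {p. p permutes {0..<n}}" "i \<in> {0..<n}"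
  then show "A $$ (i, p i) \<in> K" using entries permutes_in_image by fastforce
qed

lemma det_nonzero_if_general_position4:
  assumes "general_position4 h"
  shows "det (mat 4 4 (\<lambda>(a, b). h a b)) \<noteq> 0"
proof
  define M :: "complex mat" where "M = mat 4 4 (\<lambda>(a, b). h a b)"
  assume "det (mat 4 4 (\<lambda>(a, b). h a b)) = 0"
  then have "det (transpose_mat M) = 0" using det_transpose[of M 4] by (simp add: M_def)
  moreover have "transpose_mat M \<in> carrier_mat 4 4" by (simp add: M_def)
  ultimately obtain v where v: "v \<in> carrier_vec 4" "v \<noteq> 0\<^sub>v 4" "transpose_mat M *\<^sub>v v = 0\<^sub>v 4"
    using det_0_iff_vec_prod_zero_field by blast
  have "(\<Sum>i<4. v $ i * h i j) = 0" if "j < 4" for j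
  proof -
    have "(transpose_mat M *\<^sub>v v) $ j = (\<Sum>i<4. v $ i * h i j)"
      using that v(1) by (simp add: M_def mult_mat_vec_def scalar_prod_def atLeast0LessThan mult.commute)
    then show ?thesis using v(3) that by simp
  qed
  then have "\<forall>i<4. v $ i = 0" using assms unfolding general_position4_def by blast
  then have "v = 0\<^sub>v 4" using v(1) by (intro eq_vecI) auto
  with v(2) show False by simp
qed

lemma general_position4_inverse:
  fixes h :: "nat \<Rightarrow> nat \<Rightarrow> complex"
  assumes K: "subfield_C K" and hK: "\<And>a b. a < 4 \<Longrightarrow> b < 4 \<Longrightarrow> h a b \<in> K"
    and "general_position4 h"
  obtains B where "\<And>a b. a < 4 \<Longrightarrow> b < 4 \<Longrightarrow> B a b \<in> K"
    and "\<And>a b. a < 4 \<Longrightarrow> b < 4 \<Longrightarrow> (\<Sum>c<4. h a c * B c b) = (if a = b then 1 else 0)"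
    and "\<And>a b. a < 4 \<Longrightarrow> b < 4 \<Longrightarrow> (\<Sum>c<4. B a c * h c b) = (if a = b then 1 else 0)"
proof -
  define M :: "complex mat" where "M = mat 4 4 (\<lambda>(a, b). h a b)"
  have M: "M \<in> carrier_mat 4 4" by (simp add: M_def)
  have "det M \<noteq> 0" unfolding M_def by (rule det_nonzero_if_general_position4) fact
  have "det (mat_delete M b a) \<in> K" if ab: "a < 4" "b < 4" for a b
  proof (rule subfield_C_det[OF K])
    show "mat_delete M b a \<in> carrier_mat 3 3" using mat_delete_carrier[OF M] by simp
    show "mat_delete M b a $$ (a', b') \<in> K" if "a' < 3" "b' < 3" for a' b'
      using that ab by (simp add: mat_delete_def M_def hK)
  qed
  moreover have "det M \<in> K" by (rule subfield_C_det[OF K M]) (simp add: M_def hK)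
  ultimately have MK: "det (mat_delete M b a) \<in> K" "det M \<in> K" if "a < 4" "b < 4" for a b
    using that by blast+
  have adj: "M * adj_mat M = det M \<cdot>\<^sub>m 1\<^sub>m 4" "adj_mat M * M = det M \<cdot>\<^sub>m 1\<^sub>m 4"
    "adj_mat M \<in> carrier_mat 4 4"
    using adj_mat[OF M] by auto
  define B where "B = (\<lambda>a b. adj_mat M $$ (a, b) / det M)"
  have "B a b \<in> K" if "a < 4" "b < 4" for a b
    unfolding B_def
    using that MK by (auto simp: adj_mat_def M_def cofactor_def intro!: subfield_C_divide[OF K]
        subfield_C_mult[OF K] subfield_C_power[OF K] subfield_C_uminus[OF K] subfield_C_one[OF K])
  moreover have "(\<Sum>c<4. h a c * B c b) = (if a = b then 1 else 0)"
    if "a < 4" "b < 4" for a b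
  proof -
    have "(\<Sum>c<4. h a c * adj_mat M $$ (c, b)) = (M * adj_mat M) $$ (a, b)"
      using that adj(3) by (simp add: M_def scalar_prod_def atLeast0LessThan)
    then show ?thesis using that \<open>det M \<noteq> 0\<close> adj(1) by (simp add: B_def flip: sum_divide_distrib)
  qed
  moreover have "(\<Sum>c<4. B a c * h c b) = (if a = b then 1 else 0)"
    if "a < 4" "b < 4" for a b
  proof -
    have "(\<Sum>c<4. adj_mat M $$ (a, c) * h c b) = (adj_mat M * M) $$ (a, b)"
      using that adj(3) by (simp add: M_def scalar_prod_def atLeast0LessThan)
    then show ?thesis using that \<open>det M \<noteq> 0\<close> adj(2) by (simp add: B_def flip: sum_divide_distrib)
  qed
  ultimately show thesis using that by blast
qed

lemma lin_inverse_coordinates: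
  assumes "\<And>a b. a < 4 \<Longrightarrow> b < 4 \<Longrightarrow> (\<Sum>c<4. h a c * B c b) = (if a = b then 1 else 0)"
    and "a < 4"
  shows "lin (h a) (\<lambda>c. lin (B c) y) = y a"
proof -
  have "lin (h a) (\<lambda>c. lin (B c) y) = (\<Sum>n<4. (\<Sum>c<4. h a c * B c n) * y n)"
    by (subst lin_pullback) (simp add: lin_def pullback_def)
  also have "\<dots> = (\<Sum>n<4. if n = a then y n else 0)"
    using assms by (intro sum.cong) auto
  also have "\<dots> = y a" using assms(2) by simp
  finally show ?thesis .
qed

lemma lin_expansion_in_coordinates:
  assumes "\<And>a b. a < 4 \<Longrightarrow> b < 4 \<Longrightarrow> (\<Sum>c<4. B a c * h c b) = (if a = b then 1 else 0)"
    and "c < 4"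
  shows "g c = (\<Sum>n<4. pullback g B n * h n c)"
proof -
  have "(\<Sum>n<4. pullback g B n * h n c) = (\<Sum>c'<4. g c' * (\<Sum>n<4. B c' n * h n c))"
    unfolding pullback_def lin_def by (simp add: sum_distrib_left sum_distrib_right mult.assoc) (rule sum.swap)
  also have "\<dots> = (\<Sum>c'<4. if c' = c then g c' else 0)" using assms by (intro sum.cong) auto
  also have "\<dots> = g c" using assms(2) by simp
  finally show ?thesis by simp
qed

lemma sum_lessThan_4_split:
  assumes "{..<4} = {i, j, k, n0 :: nat}" and "distinct [i, j, k, n0]"
  shows "(\<Sum>n<4. f n) = f i + f j + f k + f n0"
  using assms(2) by (simp add: assms(1) algebra_simps)

definition S_comaximal :: "complex set \<Rightarrow> nat \<Rightarrow> complex \<Rightarrow> complex \<Rightarrow> bool" where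
  "S_comaximal L N x y \<longleftrightarrow> (\<exists>a\<in>S_integers L N. \<exists>b\<in>S_integers L N. a * x + b * y = 1)"

lemma integral_point_of_coordinates:
  assumes K: "subfield_C K"
    and hB: "\<And>a b. a < 4 \<Longrightarrow> b < 4 \<Longrightarrow> (\<Sum>c<4. h a c * B c b) = (if a = b then 1 else 0)"
    and hS: "\<And>a b. a < 4 \<Longrightarrow> b < 4 \<Longrightarrow> h a b \<in> S_integers K N"
    and BS: "\<And>a b. a < 4 \<Longrightarrow> b < 4 \<Longrightarrow> B a b \<in> S_integers K N"
    and units: "\<And>n. n < 4 \<Longrightarrow> S_unit K N (y n)" and "i < 4" "y i = 1"
    and lines: "\<And>l. l < r \<Longrightarrow> S_comaximal K N (lin (pullback (g1 l) B) y) (lin (pullback (g2 l) B) y)"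
  shows "integral_point K N h r g1 g2 (\<lambda>c. lin (B c) y)"
  unfolding integral_point_def
proof (intro conjI allI impI)
  show "lin (B c) y \<in> S_integers K N" if "c < 4" for c
    using that BS units unfolding lin_def S_unit_def
    by (intro S_integers_sum[OF K] S_integers_mult[OF K]) auto
  show "\<exists>a. (\<forall>j<4. a j \<in> S_integers K N) \<and> (\<Sum>j<4. a j * lin (B j) y) = 1"
    using hS \<open>i < 4\<close> lin_inverse_coordinates[OF hB \<open>i < 4\<close>] \<open>y i = 1\<close>
    by (intro exI[of _ "h i"]) (simp add: lin_def)
  show "S_unit K N (lin (h a) (\<lambda>c. lin (B c) y))" if "a < 4" for a
    using units[OF that] lin_inverse_coordinates[OF hB that] by simp
  show "\<exists>a\<in>S_integers K N. \<exists>b\<in>S_integers K N.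
      a * lin (g1 l) (\<lambda>c. lin (B c) y) + b * lin (g2 l) (\<lambda>c. lin (B c) y) = 1" if "l < r" for l
    using lines[OF that] by (simp add: lin_pullback S_comaximal_def)
qed

text \<open>In the coordinates \<open>y = h(x)\<close> the point \<open>p\<close> is the \<open>n\<^sub>0\<close>-th coordinate point, so a
  linear form vanishing at \<open>p\<close> has no \<open>y\<^sub>n\<^sub>0\<close>-term.\<close>

lemma lin_inverse_column_eq_zero:
  assumes Bh: "\<And>a b. a < 4 \<Longrightarrow> b < 4 \<Longrightarrow> (\<Sum>c<4. B a c * h c b) = (if a = b then 1 else 0)"
    and S4: "{..<4} = {i, j, k, n0 :: nat}" and dist: "distinct [i, j, k, n0]"
    and p: "\<exists>t<4. p t \<noteq> 0"
    and hp: "lin (h i) p = 0" "lin (h j) p = 0" "lin (h k) p = 0" and "lin g p = 0"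
  shows "pullback g B n0 = 0"
proof -
  define hp where "hp = lin (h n0) p"
  have p_eq: "p c = B c n0 * hp" if "c < 4" for c
  proof -
    have "p c = lin (B c) (\<lambda>n. lin (h n) p)"
      using lin_inverse_coordinates[of B h c p] Bh that by simp
    also have "\<dots> = B c n0 * hp"
      using hp unfolding lin_def[of "B c"] hp_def by (simp add: sum_lessThan_4_split[OF S4 dist])
    finally show ?thesis .
  qed
  have "hp \<noteq> 0"
  proof
    assume "hp = 0"
    then have "\<forall>t<4. p t = 0" using p_eq by simp
    with p show False by blast
  qed
  moreover have "lin g p = pullback g B n0 * hp"
    unfolding pullback_def lin_def sum_distrib_right using p_eq by (intro sum.cong) simp_all
  ultimately show ?thesis using \<open>lin g p = 0\<close> by simp
qed

lemma vanishing_minors_imp_dependent: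
  fixes a1 a2 a3 b1 b2 b3 :: "'a::field"
  assumes "a1 * b2 - a2 * b1 = 0" "a1 * b3 - a3 * b1 = 0" "a2 * b3 - a3 * b2 = 0"
  obtains x y where "x \<noteq> 0 \<or> y \<noteq> 0"
    and "x * a1 + y * b1 = 0" "x * a2 + y * b2 = 0" "x * a3 + y * b3 = 0"
proof (cases "a1 = 0 \<and> a2 = 0 \<and> a3 = 0")
  case True
  then show thesis using that[of 1 0] by simp
next
  case False
  then consider "a1 \<noteq> 0" | "a2 \<noteq> 0" | "a3 \<noteq> 0" by blast
  then show thesis
  proof cases
    case 1
    then show thesis using that[of b1 "- a1"] assms by (simp add: algebra_simps)
  next
    case 2
    then show thesis using that[of b2 "- a2"] assms by (simp add: algebra_simps)
  next
    case 3
    then show thesis using that[of b3 "- a3"] assms by (simp add: algebra_simps)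
  qed
qed

lemma minors_nonzero_if_lin_indep2:
  assumes Bh: "\<And>a b. a < 4 \<Longrightarrow> b < 4 \<Longrightarrow> (\<Sum>c<4. B a c * h c b) = (if a = b then 1 else 0)"
    and S4: "{..<4} = {i, j, k, n0 :: nat}" and "lin_indep2 g1 g2"
    and "pullback g1 B n0 = 0" "pullback g2 B n0 = 0"
  defines "\<alpha> \<equiv> pullback g1 B" and "\<beta> \<equiv> pullback g2 B"
  shows "\<alpha> i * \<beta> j - \<alpha> j * \<beta> i \<noteq> 0 \<or> \<alpha> i * \<beta> k - \<alpha> k * \<beta> i \<noteq> 0 \<or> \<alpha> j * \<beta> k - \<alpha> k * \<beta> j \<noteq> 0"
proof (rule ccontr)
  assume "\<not> ?thesis"
  then have "\<alpha> i * \<beta> j - \<alpha> j * \<beta> i = 0" "\<alpha> i * \<beta> k - \<alpha> k * \<beta> i = 0"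
    "\<alpha> j * \<beta> k - \<alpha> k * \<beta> j = 0"
    by simp_all
  then obtain x y where xy: "x \<noteq> 0 \<or> y \<noteq> 0"
    "x * \<alpha> i + y * \<beta> i = 0" "x * \<alpha> j + y * \<beta> j = 0" "x * \<alpha> k + y * \<beta> k = 0"
    by (rule vanishing_minors_imp_dependent)
  have "x * \<alpha> n0 + y * \<beta> n0 = 0" using assms(4,5) by (simp add: \<alpha>_def \<beta>_def)
  moreover have "n = i \<or> n = j \<or> n = k \<or> n = n0" if "n < 4" for n
    using that S4 by (metis empty_iff insert_iff lessThan_iff)
  ultimately have "x * \<alpha> n + y * \<beta> n = 0" if "n < 4" for n
    using that xy(2-4) by auto
  moreover have "x * g1 c + y * g2 c = (\<Sum>n<4. (x * \<alpha> n + y * \<beta> n) * h n c)" if "c < 4" for c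
  proof -
    have "g1 c = (\<Sum>n<4. \<alpha> n * h n c)"
      unfolding \<alpha>_def by (rule lin_expansion_in_coordinates[OF Bh that])
    moreover have "g2 c = (\<Sum>n<4. \<beta> n * h n c)"
      unfolding \<beta>_def by (rule lin_expansion_in_coordinates[OF Bh that])
    ultimately show ?thesis by (simp add: sum_distrib_left distrib_right sum.distrib mult.assoc)
  qed
  ultimately have "x * g1 c + y * g2 c = 0" if "c < 4" for c
    using that by simp
  with \<open>lin_indep2 g1 g2\<close> xy(1) show False unfolding lin_indep2_def by blast
qed

section \<open>Points avoiding the lines through \<open>p\<close>\<close>

definition two_powers :: "complex set" where
  "two_powers = range (\<lambda>t::nat. 2 ^ t)"

lemma inj_two_power: "inj (\<lambda>t::nat. (2::complex) ^ t)"
proof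
  fix a b :: nat assume "(2::complex) ^ a = 2 ^ b"
  then have "of_nat (2 ^ a) = (of_nat (2 ^ b) :: complex)" by simp
  then show "a = b" by (simp only: of_nat_eq_iff) simp
qed

lemma infinite_two_powers: "infinite two_powers"
  unfolding two_powers_def using inj_two_power by (rule range_inj_infinite)

lemma two_powers_S_integers: "subfield_C K \<Longrightarrow> x \<in> two_powers \<Longrightarrow> x \<in> S_integers K N"
  using S_integers_of_nat[of K "2 ^ t" N for t] by (auto simp: two_powers_def)

lemma infinite_two_powers_progression:
  assumes "v0 \<in> two_powers" and "e > 0"
  shows "infinite (range (\<lambda>t. v0 * 2 ^ (e * t)))" and "range (\<lambda>t. v0 * 2 ^ (e * t)) \<subseteq> two_powers"
proof -
  obtain t0 where "v0 = 2 ^ t0" using assms(1) by (auto simp: two_powers_def)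
  then have eq: "range (\<lambda>t. v0 * 2 ^ (e * t)) = (\<lambda>t. 2 ^ t) ` range (\<lambda>t. t0 + e * t)"
    unfolding image_image by (simp add: power_add)
  have "inj (\<lambda>t. t0 + e * t)" using assms(2) by (auto intro!: injI)
  then have "infinite ((\<lambda>t. 2 ^ t) ` range (\<lambda>t. t0 + e * t) :: complex set)"
    using range_inj_infinite finite_imageD inj_on_subset[OF inj_two_power] by blast
  then show "infinite (range (\<lambda>t. v0 * 2 ^ (e * t)))" by (simp add: eq)
  show "range (\<lambda>t. v0 * 2 ^ (e * t)) \<subseteq> two_powers" by (auto simp: eq two_powers_def)
qed

lemma S_comaximal_if_invertible_combination:
  assumes K: "subfield_C K" and "a \<in> S_integers K N" "b \<in> S_integers K N"
    and "\<kappa> \<noteq> 0" "inverse \<kappa> \<in> S_integers K N" and "a * x + b * y = \<kappa>"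
  shows "S_comaximal K N x y"
  unfolding S_comaximal_def
proof (intro bexI)
  show "a * inverse \<kappa> * x + b * inverse \<kappa> * y = 1"
    using assms(4,6) by (auto simp: field_simps)
qed (use assms in \<open>auto intro: S_integers_mult[OF K]\<close>)

text \<open>For the line \<open>{G\<^sub>1 = G\<^sub>2 = 0}\<close> with \<open>G\<^sub>1 = a\<^sub>i + a\<^sub>j u + a\<^sub>k v\<close>, \<open>G\<^sub>2 = b\<^sub>i + b\<^sub>j u + b\<^sub>k v\<close> and minors
  \<open>D\<^sub>1\<^sub>2, D\<^sub>1\<^sub>3, D\<^sub>2\<^sub>3\<close>, one has \<open>b\<^sub>j G\<^sub>1 - a\<^sub>j G\<^sub>2 = D\<^sub>1\<^sub>2 - D\<^sub>2\<^sub>3 v\<close> and \<open>b\<^sub>k G\<^sub>1 - a\<^sub>k G\<^sub>2 = D\<^sub>1\<^sub>3 + D\<^sub>2\<^sub>3 u\<close>.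
  If \<open>v = v\<^sub>0 \<rho>\<close> with \<open>\<rho> \<equiv> 1\<close> modulo \<open>D\<^sub>1\<^sub>3 + D\<^sub>2\<^sub>3 u\<close>, a combination of the two gives the constant
  \<open>D\<^sub>1\<^sub>2 - D\<^sub>2\<^sub>3 v\<^sub>0\<close>.\<close>

lemma line_forms_S_comaximal:
  fixes ai aj ak bi bj bk u v v0 \<rho> s :: complex
  defines "D12 \<equiv> ai * bj - aj * bi" and "D13 \<equiv> ai * bk - ak * bi" and "D23 \<equiv> aj * bk - ak * bj"
  assumes K: "subfield_C K"
    and S: "aj \<in> S_integers K N" "ak \<in> S_integers K N" "bj \<in> S_integers K N" "bk \<in> S_integers K N"
      "v0 \<in> S_integers K N" "s \<in> S_integers K N"
    and v: "v = v0 * \<rho>" and \<rho>: "D23 * (\<rho> - 1) = D23 * (D13 + D23 * u) * s"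
    and \<kappa>: "D12 - D23 * v0 \<noteq> 0" "inverse (D12 - D23 * v0) \<in> S_integers K N"
  shows "S_comaximal K N (ai + aj * u + ak * v) (bi + bj * u + bk * v)"
proof -
  define c where "c = D23 * v0 * s"
  have "c \<in> S_integers K N"
    unfolding c_def D23_def using S by (intro S_integers_mult[OF K] S_integers_diff[OF K])
  have "(bj + c * bk) * (ai + aj * u + ak * v) + (- (aj + c * ak)) * (bi + bj * u + bk * v)
      = (D12 - D23 * v) + c * (D13 + D23 * u)"
    by (simp add: D12_def D13_def D23_def algebra_simps)
  also have "\<dots> = D12 - D23 * v0 * \<rho> + v0 * (D23 * (\<rho> - 1))"
    by (simp add: c_def v \<rho> mult_ac)
  also have "\<dots> = D12 - D23 * v0" by (simp add: algebra_simps)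
  finally have combination: "(bj + c * bk) * (ai + aj * u + ak * v) + (- (aj + c * ak)) * (bi + bj * u + bk * v)
      = D12 - D23 * v0" .
  show ?thesis
    by (rule S_comaximal_if_invertible_combination[OF K _ _ \<kappa> combination])
      (use S \<open>c \<in> S_integers K N\<close> in
        \<open>auto simp del: minus_add_distrib
          intro: S_integers_add[OF K] S_integers_mult[OF K] S_integers_uminus[OF K]\<close>)
qed

lemma degenerate_line_forms_S_comaximal:
  fixes ai aj ak bi bj bk u v :: complex
  defines "D13 \<equiv> ai * bk - ak * bi" and "D23 \<equiv> aj * bk - ak * bj"
  assumes K: "subfield_C K" and S: "ak \<in> S_integers K N" "bk \<in> S_integers K N"
    and "D23 = 0" "D13 \<noteq> 0" "inverse D13 \<in> S_integers K N"
  shows "S_comaximal K N (ai + aj * u + ak * v) (bi + bj * u + bk * v)"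
proof (rule S_comaximal_if_invertible_combination[OF K S(2) S_integers_uminus[OF K S(1)]])
  show "bk * (ai + aj * u + ak * v) + - ak * (bi + bj * u + bk * v) = D13"
    using \<open>D23 = 0\<close> unfolding D13_def D23_def by (simp add: algebra_simps)
qed (use assms in auto)

text \<open>The grid: \<open>u\<close> runs over the powers of \<open>2\<close> avoiding the roots of the factors \<open>D\<^sub>1\<^sub>3 + D\<^sub>2\<^sub>3 u\<close>, and
  for each \<open>u\<close> the element \<open>v\<close> runs over \<open>v\<^sub>0 2\<^bsup>e t\<^esup>\<close>, where \<open>2\<^sup>e \<equiv> 1\<close> modulo all these factors.\<close>

lemma S_comaximal_grid:
  fixes a b :: "nat \<Rightarrow> nat \<Rightarrow> complex" and i j k :: nat
  defines "D12 \<equiv> \<lambda>l. a l i * b l j - a l j * b l i" and "D13 \<equiv> \<lambda>l. a l i * b l k - a l k * b l i"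
    and "D23 \<equiv> \<lambda>l. a l j * b l k - a l k * b l j"
  assumes K: "subfield_C K" and N: "N > 0" "2 dvd N"
    and S: "\<And>l n. l < r \<Longrightarrow> n \<in> {i, j, k} \<Longrightarrow> a l n \<in> S_integers K N \<and> b l n \<in> S_integers K N"
    and "v0 \<in> two_powers"
    and lines: "\<And>l. l < r \<Longrightarrow> D12 l - D23 l * v0 \<noteq> 0 \<and> inverse (D12 l - D23 l * v0) \<in> S_integers K N
      \<or> D23 l = 0 \<and> D13 l \<noteq> 0 \<and> inverse (D13 l) \<in> S_integers K N"
  obtains U V where "infinite U" "U \<subseteq> two_powers" "\<And>u. u \<in> U \<Longrightarrow> infinite (V u) \<and> V u \<subseteq> two_powers"
    and "\<And>l u v. l < r \<Longrightarrow> u \<in> U \<Longrightarrow> v \<in> V u \<Longrightarrow>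
      S_comaximal K N (a l i + a l j * u + a l k * v) (b l i + b l j * u + b l k * v)"
proof -
  define L where "L = {l. l < r \<and> D23 l \<noteq> 0}"
  define U where "U = two_powers - (\<lambda>l. - D13 l / D23 l) ` L"
  have D_S: "D13 l \<in> S_integers K N" "D23 l \<in> S_integers K N" if "l < r" for l
    unfolding D13_def D23_def using S[OF that]
    by (auto intro!: S_integers_diff[OF K] S_integers_mult[OF K])
  have factor_nonzero: "D13 l + D23 l * u \<noteq> 0" if "u \<in> U" "l \<in> L" for u l
  proof
    assume "D13 l + D23 l * u = 0"
    then have "u * D23 l = - D13 l" by (simp add: eq_neg_iff_add_eq_0 mult.commute add.commute)
    then have "u = - D13 l / D23 l" using that(2) by (simp add: L_def field_simps)
    with that show False by (auto simp: U_def)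
  qed
  have "\<exists>e>0. \<forall>l\<in>L. \<forall>t. ((2::complex) ^ (e * t) - 1) / (D13 l + D23 l * u) \<in> S_integers K N"
    if u: "u \<in> U" for u
  proof -
    have "D13 l + D23 l * u \<in> S_integers K N" if "l \<in> L" for l
      using that u D_S two_powers_S_integers[OF K]
      by (auto simp: U_def L_def intro!: S_integers_add[OF K] S_integers_mult[OF K])
    then obtain e where "e > 0"
      "\<And>l t. l \<in> L \<Longrightarrow> (of_nat 2 ^ (e * t) - 1) / (D13 l + D23 l * u) \<in> S_integers K N"
      using S_integers_power_congruent_one_finite[where L = L and m = "\<lambda>l. D13 l + D23 l * u",
          OF K \<open>2 dvd N\<close> _ \<open>N > 0\<close>] factor_nonzero[OF u]
      by (auto simp: L_def)
    then show ?thesis by auto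
  qed
  then obtain E where E: "\<And>u. u \<in> U \<Longrightarrow> E u > 0"
    "\<And>u l t. u \<in> U \<Longrightarrow> l \<in> L \<Longrightarrow> ((2::complex) ^ (E u * t) - 1) / (D13 l + D23 l * u) \<in> S_integers K N"
    by metis
  show thesis
  proof
    show "infinite U"
      unfolding U_def L_def by (intro Diff_infinite_finite infinite_two_powers) auto
    show "U \<subseteq> two_powers" by (auto simp: U_def)
    show "infinite (range (\<lambda>t. v0 * 2 ^ (E u * t))) \<and> range (\<lambda>t. v0 * 2 ^ (E u * t)) \<subseteq> two_powers"
      if "u \<in> U" for u
      using infinite_two_powers_progression[OF \<open>v0 \<in> two_powers\<close> E(1)[OF that]] by blast
    fix l u v assume "l < r" "u \<in> U" "v \<in> range (\<lambda>t. v0 * 2 ^ (E u * t))"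
    then obtain t where v: "v = v0 * 2 ^ (E u * t)" by auto
    define s where "s = (if D23 l = 0 then 0 else ((2::complex) ^ (E u * t) - 1) / (D13 l + D23 l * u))"
    have "s \<in> S_integers K N"
      using E(2)[OF \<open>u \<in> U\<close>] \<open>l < r\<close> S_integers_of_nat[OF K, of 0] by (auto simp: s_def L_def)
    moreover have "D23 l * (2 ^ (E u * t) - 1) = D23 l * (D13 l + D23 l * u) * s"
      using factor_nonzero[OF \<open>u \<in> U\<close>, of l] \<open>l < r\<close> by (auto simp: s_def L_def)
    ultimately show "S_comaximal K N (a l i + a l j * u + a l k * v) (b l i + b l j * u + b l k * v)"
      using lines[OF \<open>l < r\<close>] S[OF \<open>l < r\<close>] two_powers_S_integers[OF K \<open>v0 \<in> two_powers\<close>]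
        line_forms_S_comaximal[OF K, of "a l j" N "a l k" "b l j" "b l k" v0 s v "2 ^ (E u * t)"
          "a l i" "b l i" u]
        degenerate_line_forms_S_comaximal[OF K, of "a l k" N "b l k" "a l j" "b l j" "a l i" "b l i"]
      by (auto simp: D12_def D13_def D23_def v)
  qed
qed

lemma exists_two_power_avoiding:
  fixes c d :: "'i \<Rightarrow> complex"
  assumes "finite L"
  obtains v0 where "v0 \<in> two_powers" and "\<And>l. l \<in> L \<Longrightarrow> d l \<noteq> 0 \<Longrightarrow> c l - d l * v0 \<noteq> 0"
proof -
  have "infinite (two_powers - (\<lambda>l. c l / d l) ` L)"
    using assms by (intro Diff_infinite_finite infinite_two_powers) simp
  then obtain v0 where v0: "v0 \<in> two_powers" "v0 \<notin> (\<lambda>l. c l / d l) ` L"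
    using infinite_imp_nonempty by blast
  show thesis
  proof (rule that[OF v0(1)])
    fix l assume "l \<in> L" "d l \<noteq> 0"
    show "c l - d l * v0 \<noteq> 0"
    proof
      assume "c l - d l * v0 = 0"
      then have "v0 = c l / d l" using \<open>d l \<noteq> 0\<close> by (simp add: field_simps)
      with v0(2) \<open>l \<in> L\<close> show False by auto
    qed
  qed
qed

text \<open>The point \<open>v\<^sub>0\<close> is chosen so that \<open>D\<^sub>1\<^sub>2 - D\<^sub>2\<^sub>3 v\<^sub>0 \<noteq> 0\<close> unless \<open>D\<^sub>1\<^sub>2 = D\<^sub>2\<^sub>3 = 0\<close>; then \<open>S\<close> is
  enlarged until these constants become S-units.\<close>

lemma exists_S_integral_grid:
  fixes a b :: "nat \<Rightarrow> nat \<Rightarrow> complex" and i j k :: nat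
  defines "D12 \<equiv> \<lambda>l. a l i * b l j - a l j * b l i" and "D13 \<equiv> \<lambda>l. a l i * b l k - a l k * b l i"
    and "D23 \<equiv> \<lambda>l. a l j * b l k - a l k * b l j"
  assumes nf: "number_field K" and X: "finite X" "X \<subseteq> K"
    and coeffs: "\<And>l n. l < r \<Longrightarrow> n \<in> {i, j, k} \<Longrightarrow> a l n \<in> K \<and> b l n \<in> K"
    and minors: "\<And>l. l < r \<Longrightarrow> D12 l \<noteq> 0 \<or> D13 l \<noteq> 0 \<or> D23 l \<noteq> 0"
  obtains N U V where "N > 0" "2 dvd N" "X \<subseteq> S_integers K N"
    and "infinite U" "U \<subseteq> two_powers" "\<And>u. u \<in> U \<Longrightarrow> infinite (V u) \<and> V u \<subseteq> two_powers"
    and "\<And>l u v. l < r \<Longrightarrow> u \<in> U \<Longrightarrow> v \<in> V u \<Longrightarrow>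
      S_comaximal K N (a l i + a l j * u + a l k * v) (b l i + b l j * u + b l k * v)"
proof -
  have K: "subfield_C K" using nf by (simp add: number_field_def)
  obtain v0 where v0: "v0 \<in> two_powers" "\<And>l. l \<in> {..<r} \<Longrightarrow> D23 l \<noteq> 0 \<Longrightarrow> D12 l - D23 l * v0 \<noteq> 0"
    using exists_two_power_avoiding[where L = "{..<r}" and c = D12 and d = D23] by blast
  define \<kappa> where "\<kappa> = (\<lambda>l. D12 l - D23 l * v0)"
  have \<kappa>: "\<kappa> l \<noteq> 0 \<or> D23 l = 0 \<and> D13 l \<noteq> 0" if "l < r" for l
    using v0(2)[of l] minors[OF that] that by (cases "D23 l = 0") (auto simp: \<kappa>_def)
  have D_K: "D12 l \<in> K" "D13 l \<in> K" "D23 l \<in> K" if "l < r" for l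
    unfolding D12_def D13_def D23_def using coeffs[OF that]
    by (auto intro!: subfield_C_diff[OF K] subfield_C_mult[OF K])
  have "v0 \<in> K"
    using v0(1) subfield_C_power[OF K subfield_C_of_int[OF K, of 2]] by (auto simp: two_powers_def)
  define X' where "X' = X \<union> (\<lambda>(l, n). a l n) ` ({..<r} \<times> {i, j, k}) \<union> (\<lambda>(l, n). b l n) ` ({..<r} \<times> {i, j, k})
    \<union> (\<lambda>l. inverse (\<kappa> l)) ` {..<r} \<union> (\<lambda>l. inverse (D13 l)) ` {..<r}"
  have "X' \<subseteq> K"
    unfolding X'_def \<kappa>_def using X(2) coeffs D_K \<open>v0 \<in> K\<close>
    by (auto intro!: subfield_C_inverse[OF K] subfield_C_diff[OF K] subfield_C_mult[OF K])
  then obtain N where N: "N > 0" "2 dvd N" "X' \<subseteq> S_integers K N"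
    using number_field_finite_subset_S_integers[OF nf, of X' 2] X(1) by (auto simp: X'_def)
  obtain U V where "infinite U" "U \<subseteq> two_powers" "\<And>u. u \<in> U \<Longrightarrow> infinite (V u) \<and> V u \<subseteq> two_powers"
    and "\<And>l u v. l < r \<Longrightarrow> u \<in> U \<Longrightarrow> v \<in> V u \<Longrightarrow>
      S_comaximal K N (a l i + a l j * u + a l k * v) (b l i + b l j * u + b l k * v)"
  proof (rule S_comaximal_grid[OF K N(1,2) _ v0(1), of r i j k a b])
    show "a l n \<in> S_integers K N \<and> b l n \<in> S_integers K N" if "l < r" "n \<in> {i, j, k}" for l n
      using that N(3) by (auto simp: X'_def)
    show "a l i * b l j - a l j * b l i - (a l j * b l k - a l k * b l j) * v0 \<noteq> 0 \<and>
        inverse (a l i * b l j - a l j * b l i - (a l j * b l k - a l k * b l j) * v0) \<in> S_integers K N \<or>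
        a l j * b l k - a l k * b l j = 0 \<and> a l i * b l k - a l k * b l i \<noteq> 0 \<and>
        inverse (a l i * b l k - a l k * b l i) \<in> S_integers K N" if "l < r" for l
      using \<kappa>[OF that] that N(3) by (auto simp: X'_def \<kappa>_def D12_def D13_def D23_def)
  qed auto
  moreover have "X \<subseteq> S_integers K N" using N(3) by (auto simp: X'_def)
  ultimately show thesis using that N(1,2) by blast
qed

lemma obtain_fourth_index:
  assumes "i < 4" "j < 4" "k < 4" "distinct [i, j, k :: nat]"
  obtains n0 where "{..<4} = {i, j, k, n0}" and "distinct [i, j, k, n0]"
proof -
  have "\<not> {..<4} \<subseteq> {i, j, k}"
  proof
    assume "{..<4} \<subseteq> {i, j, k}"
    then have "card {..<4::nat} \<le> card {i, j, k}" by (intro card_mono) auto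
    with assms(4) show False by simp
  qed
  then obtain n0 where n0: "n0 < 4" "n0 \<notin> {i, j, k}" by blast
  then have "distinct [i, j, k, n0]" using assms(4) by auto
  moreover have "{i, j, k, n0} = {..<4}"
    using assms(1-3) n0(1) calculation by (intro card_subset_eq) auto
  ultimately show thesis using that by (metis (no_types))
qed

lemma exists_S_integral_grid_for_lines:
  fixes h B g1 g2 :: "nat \<Rightarrow> nat \<Rightarrow> complex"
  assumes nf: "number_field K"
    and hK: "\<And>a b. a < 4 \<Longrightarrow> b < 4 \<Longrightarrow> h a b \<in> K" and BK: "\<And>a b. a < 4 \<Longrightarrow> b < 4 \<Longrightarrow> B a b \<in> K"
    and Bh: "\<And>a b. a < 4 \<Longrightarrow> b < 4 \<Longrightarrow> (\<Sum>c<4. B a c * h c b) = (if a = b then 1 else 0)"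
    and S4: "{..<4} = {i, j, k, n0}" and "distinct [i, j, k, n0]"
    and g: "\<And>l. l < r \<Longrightarrow> coeffs_in K (g1 l) \<and> coeffs_in K (g2 l) \<and> lin_indep2 (g1 l) (g2 l)"
    and through_p: "\<And>l. l < r \<Longrightarrow> pullback (g1 l) B n0 = 0 \<and> pullback (g2 l) B n0 = 0"
  obtains N U V where "N > 0" "2 dvd N"
    and "\<And>a b. a < 4 \<Longrightarrow> b < 4 \<Longrightarrow> h a b \<in> S_integers K N \<and> B a b \<in> S_integers K N"
    and "\<And>l. l < r \<Longrightarrow> coeffs_in (S_integers K N) (g1 l) \<and> coeffs_in (S_integers K N) (g2 l)"
    and "infinite U" "U \<subseteq> two_powers" "\<And>u. u \<in> U \<Longrightarrow> infinite (V u) \<and> V u \<subseteq> two_powers"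
    and "\<And>l u v. l < r \<Longrightarrow> u \<in> U \<Longrightarrow> v \<in> V u \<Longrightarrow>
      S_comaximal K N (pullback (g1 l) B i + pullback (g1 l) B j * u + pullback (g1 l) B k * v)
        (pullback (g2 l) B i + pullback (g2 l) B j * u + pullback (g2 l) B k * v)"
proof -
  have K: "subfield_C K" using nf by (simp add: number_field_def)
  define X where "X = (\<lambda>(m, c). h m c) ` ({..<4} \<times> {..<4}) \<union> (\<lambda>(m, c). B m c) ` ({..<4} \<times> {..<4})
    \<union> (\<lambda>(l, c). g1 l c) ` ({..<r} \<times> {..<4}) \<union> (\<lambda>(l, c). g2 l c) ` ({..<r} \<times> {..<4})"
  have "i < 4" "j < 4" "k < 4" using S4 by blast+
  obtain N U V where N: "N > 0" "2 dvd N" and "X \<subseteq> S_integers K N"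
    and grid: "infinite U" "U \<subseteq> two_powers" "\<And>u. u \<in> U \<Longrightarrow> infinite (V u) \<and> V u \<subseteq> two_powers"
    and lines: "\<And>l u v. l < r \<Longrightarrow> u \<in> U \<Longrightarrow> v \<in> V u \<Longrightarrow>
      S_comaximal K N (pullback (g1 l) B i + pullback (g1 l) B j * u + pullback (g1 l) B k * v)
        (pullback (g2 l) B i + pullback (g2 l) B j * u + pullback (g2 l) B k * v)"
  proof (rule exists_S_integral_grid[OF nf, where X = X and r = r and i = i and j = j and k = k
        and a = "\<lambda>l. pullback (g1 l) B" and b = "\<lambda>l. pullback (g2 l) B"])
    show "finite X" "X \<subseteq> K" using hK BK g by (auto simp: X_def coeffs_in_def)
    show "pullback (g1 l) B n \<in> K \<and> pullback (g2 l) B n \<in> K" if "l < r" "n \<in> {i, j, k}" for l n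
      using that \<open>i < 4\<close> \<open>j < 4\<close> \<open>k < 4\<close> g BK unfolding pullback_def lin_def coeffs_in_def
      by (auto intro!: subfield_C_sum[OF K] subfield_C_mult[OF K])
    show "pullback (g1 l) B i * pullback (g2 l) B j - pullback (g1 l) B j * pullback (g2 l) B i \<noteq> 0 \<or>
        pullback (g1 l) B i * pullback (g2 l) B k - pullback (g1 l) B k * pullback (g2 l) B i \<noteq> 0 \<or>
        pullback (g1 l) B j * pullback (g2 l) B k - pullback (g1 l) B k * pullback (g2 l) B j \<noteq> 0"
      if "l < r" for l
      using minors_nonzero_if_lin_indep2[OF Bh S4, of "g1 l" "g2 l"] g[OF that] through_p[OF that] by simp
  qed blast
  have hBS: "h a b \<in> S_integers K N \<and> B a b \<in> S_integers K N" if "a < 4" "b < 4" for a b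
    using that \<open>X \<subseteq> S_integers K N\<close> by (auto simp: X_def)
  have gS: "coeffs_in (S_integers K N) (g1 l) \<and> coeffs_in (S_integers K N) (g2 l)" if "l < r" for l
    using that \<open>X \<subseteq> S_integers K N\<close> by (auto simp: X_def coeffs_in_def)
  show thesis by (rule that[OF N hBS gS grid lines])
qed

lemma integral_point_of_chart:
  assumes K: "subfield_C K" and "2 dvd N"
    and hB: "\<And>a b. a < 4 \<Longrightarrow> b < 4 \<Longrightarrow> (\<Sum>c<4. h a c * B c b) = (if a = b then 1 else 0)"
    and hBS: "\<And>a b. a < 4 \<Longrightarrow> b < 4 \<Longrightarrow> h a b \<in> S_integers K N \<and> B a b \<in> S_integers K N"
    and S4: "{..<4} = {i, j, k, n0}" and dist: "distinct [i, j, k, n0]"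
    and through_p: "\<And>l. l < r \<Longrightarrow> pullback (g1 l) B n0 = 0 \<and> pullback (g2 l) B n0 = 0"
    and "w \<in> two_powers" "u \<in> two_powers" "v \<in> two_powers"
    and lines: "\<And>l. l < r \<Longrightarrow>
      S_comaximal K N (pullback (g1 l) B i + pullback (g1 l) B j * u + pullback (g1 l) B k * v)
        (pullback (g2 l) B i + pullback (g2 l) B j * u + pullback (g2 l) B k * v)"
  shows "integral_point K N h r g1 g2 (\<lambda>c. lin (B c) ((\<lambda>_. 0)(i := 1, j := u, k := v, n0 := w)))"
proof (rule integral_point_of_coordinates[OF K hB])
  define y where "y = (\<lambda>_. 0 :: complex)(i := 1, j := u, k := v, n0 := w)"
  show "h a b \<in> S_integers K N" "B a b \<in> S_integers K N" if "a < 4" "b < 4" for a b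
    using hBS[OF that] by simp_all
  have "i < 4" using S4 by blast
  then show "i < 4" "y i = 1" using dist by (simp_all add: y_def)
  show "S_unit K N (y n)" if "n < 4" for n
  proof -
    have "n \<in> {i, j, k, n0}" using that S4 by blast
    then have "y n \<in> two_powers"
      using \<open>w \<in> two_powers\<close> \<open>u \<in> two_powers\<close> \<open>v \<in> two_powers\<close> dist
      by (auto simp: y_def two_powers_def intro: range_eqI[of _ _ 0])
    then show ?thesis
      using S_unit_of_nat_power[OF K \<open>2 dvd N\<close>, of _] by (auto simp: two_powers_def)
  qed
  have "lin (pullback g B) y = pullback g B i + pullback g B j * u + pullback g B k * v + pullback g B n0 * w"
    for g
    using dist unfolding lin_def[of _ y] by (simp add: sum_lessThan_4_split[OF S4 dist] y_def)
  then show "S_comaximal K N (lin (pullback (g1 l) B) y) (lin (pullback (g2 l) B) y)" if "l < r" for l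
    using lines[OF that] through_p[OF that] by simp
qed

theorem proposition4p3:
  fixes K :: "complex set"
    and h :: "nat \<Rightarrow> nat \<Rightarrow> complex"
    and p :: "nat \<Rightarrow> complex"
    and i j k r :: nat
    and g1 g2 :: "nat \<Rightarrow> nat \<Rightarrow> complex"
  assumes "number_field K"
    and "\<forall>m<4. coeffs_in K (h m)"
    and "general_position4 h"
    and "i < 4" and "j < 4" and "k < 4" and "i \<noteq> j" and "i \<noteq> k" and "j \<noteq> k"
    and "\<exists>t<4. p t \<noteq> 0"
    and "lin (h i) p = 0" and "lin (h j) p = 0" and "lin (h k) p = 0"
    and "\<forall>l<r. coeffs_in K (g1 l) \<and> coeffs_in K (g2 l) \<and> lin_indep2 (g1 l) (g2 l)"
    and "\<forall>l<r. lin (g1 l) p = 0 \<and> lin (g2 l) p = 0"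
  shows "potentially_dense K h r g1 g2"
proof -
  have K: "subfield_C K" using assms(1) by (simp add: number_field_def)
  have hK: "\<And>a b. a < 4 \<Longrightarrow> b < 4 \<Longrightarrow> h a b \<in> K" using assms(2) by (simp add: coeffs_in_def)
  obtain n0 where S4: "{..<4} = {i, j, k, n0}" and dist: "distinct [i, j, k, n0]"
    using obtain_fourth_index[OF assms(4-6)] assms(7-9) by auto
  obtain B where BK: "\<And>a b. a < 4 \<Longrightarrow> b < 4 \<Longrightarrow> B a b \<in> K"
    and hB: "\<And>a b. a < 4 \<Longrightarrow> b < 4 \<Longrightarrow> (\<Sum>c<4. h a c * B c b) = (if a = b then 1 else 0)"
    and Bh: "\<And>a b. a < 4 \<Longrightarrow> b < 4 \<Longrightarrow> (\<Sum>c<4. B a c * h c b) = (if a = b then 1 else 0)"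
    using general_position4_inverse[OF K hK assms(3)] by blast
  have through_p: "pullback (g1 l) B n0 = 0 \<and> pullback (g2 l) B n0 = 0" if "l < r" for l
    using lin_inverse_column_eq_zero[OF Bh S4 dist assms(10-13)] assms(15) that by blast
  obtain N U V where N: "N > 0" "2 dvd N"
    and hBS: "\<And>a b. a < 4 \<Longrightarrow> b < 4 \<Longrightarrow> h a b \<in> S_integers K N \<and> B a b \<in> S_integers K N"
    and gS: "\<And>l. l < r \<Longrightarrow> coeffs_in (S_integers K N) (g1 l) \<and> coeffs_in (S_integers K N) (g2 l)"
    and grid: "infinite U" "U \<subseteq> two_powers" "\<And>u. u \<in> U \<Longrightarrow> infinite (V u) \<and> V u \<subseteq> two_powers"
    and lines: "\<And>l u v. l < r \<Longrightarrow> u \<in> U \<Longrightarrow> v \<in> V u \<Longrightarrow>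
      S_comaximal K N (pullback (g1 l) B i + pullback (g1 l) B j * u + pullback (g1 l) B k * v)
        (pullback (g2 l) B i + pullback (g2 l) B j * u + pullback (g2 l) B k * v)"
    by (rule exists_S_integral_grid_for_lines[OF assms(1) hK BK Bh S4 dist _ through_p]) (use assms(14) in auto)
  have "zariski_dense_P3 {x. integral_point K N h r g1 g2 x}"
  proof (rule zariski_dense_P3_if_grid[where H = h, OF _ S4 dist infinite_two_powers grid(1)])
    show "(\<lambda>c. lin (B c) ((\<lambda>_. 0)(i := 1, j := u, k := v, n0 := w))) \<in> {x. integral_point K N h r g1 g2 x}"
      if "w \<in> two_powers" "u \<in> U" "v \<in> V u" for w u v
      by (intro CollectI integral_point_of_chart[OF K N(2) hB hBS S4 dist through_p that(1)])
        (use that grid lines in auto)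
  qed (use Bh grid(3) in auto)
  then show ?thesis
    unfolding potentially_dense_def using assms(1) N(1) hBS gS
    by (intro exI[of _ K] exI[of _ N]) (auto simp: coeffs_in_def)
qed

end
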